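(* Assume the setting in the context (deterministic $\Phi$ with $\operatorname{rank}(\widehat\Phi_1)=k$). Let $\theta_1\le\dots\le\theta_k$ be the principal angles between $\mathcal R(Q)$ and $\mathcal R(U_k)$, and $\varphi_1\le\dots\le\varphi_k$ the principal angles between $\mathcal R(P)$ and $\mathcal R(V_k)$. Then for $i=1,\dots,k$, $$\cos\theta_i\ge\frac{1}{\sqrt{1+\delta_i^{4q+4}\|\widehat\Phi_2\widehat\Phi_1^\dagger\|_2^2}},\qquad \tan\theta_i\le\delta_i^{2q+2}\|\widehat\Phi_2\widehat\Phi_1^\dagger\|_2,$$ $$\cos\varphi_i\ge\frac{1}{\sqrt{1+\delta_i^{4q+2}\|\widehat\Phi_2\widehat\Phi_1^\dagger\|_2^2}},\qquad \tan\varphi_i\le\delta_i^{2q+1}\|\widehat\Phi_2\widehat\Phi_1^\dagger\|_2.$$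
   Context: Let $A\in\mathbb R^{m\times n}$ with $m\ge n$ have full SVD $A=U\Sigma V^T$, with singular values $\sigma_1\ge\sigma_2\ge\dots\ge\sigma_n\ge 0$. Fix an integer $k\ge1$ with $\sigma_k>0$ (the paper regards $A$ as having numerical rank $k$, i.e. $\sigma_k$ well separated from $\sigma_{k+1}$). Write $U=[U_k\ U_\perp]$ with $U_k\in\mathbb R^{m\times k}$ the first $k$ left singular vectors $u_1,\dots,u_k$, $U_\perp\in\mathbb R^{m\times(m-k)}$ the rest; $V=[V_k\ V_\perp]$ with $V_k\in\mathbb R^{n\times k}$ the first $k$ right singular vectors $v_1,\dots,v_k$; $\Sigma_k=\mathrm{diag}(\sigma_1,\dots,\sigma_k)$ and $\Sigma_\perp$ the remaining diagonal block of $\Sigma$ containing $\sigma_{k+1},\dots,\sigma_n$ (so $\|\Sigma_\perp\|_2=\sigma_{k+1}$, $\|\Sigma_\perp\|_F=(\sum_{i>k}\sigma_i^2)^{1/2}$). The notation $\|\cdot\|_{2,F}$ means the statement holds for both the spectral and Frobenius norm. Let $p\ge1$ be an oversampling integer, $d=k+p<n$, and $q\ge0$ an integer (power-iteration parameter). RU-QLP (Randomized Unpivoted QLP): given $\Phi\in\mathbb R^{m\times d}$, let $\bar P\in\mathbb R^{n\times d}$ have orthonormal columns spanning the range of $(A^TA)^qA^T\Phi$ (assumed of rank $d$); compute the thin unpivoted QR factorization $A\bar P=QR$ with $Q\in\mathbb R^{m\times d}$ having orthonormal columns and $R\in\mathbb R^{d\times d}$ upper triangular; compute the thin unpivoted QR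 factorization $R^T=\widetilde P\widetilde R$; set $P=\bar P\widetilde P\in\mathbb R^{n\times d}$ and $L=\widetilde R^T$ (lower triangular), giving $\hat A=QLP^T$. Partition $R=\begin{bmatrix}R_{11}&R_{12}\\0&R_{22}\end{bmatrix}$ and $L=\begin{bmatrix}L_{11}&0\\L_{21}&L_{22}\end{bmatrix}$ with $R_{11},L_{11}\in\mathbb R^{k\times k}$. Define $\widehat\Phi_1=U_k^T\Phi\in\mathbb R^{k\times d}$ and $\widehat\Phi_2=U_\perp^T\Phi\in\mathbb R^{(m-k)\times d}$, assume $\widehat\Phi_1$ has rank $k$, and let $\dagger$ denote the Moore–Penrose inverse. Set $\delta_i=\sigma_{k+1}/\sigma_i$ for $i=1,\dots,k$ and $\gamma=\sigma_n/\sigma_1$. Principal angles between a subspace $\mathcal X$ and a $k$-dimensional subspace $\mathcal Y$ (with $\dim\mathcal X\ge k$) are the $k$ canonical angles $0\le\alpha_1\le\dots\le\alpha_k\le\pi/2$; for orthonormal bases $X$, $Y$, the values $\sin\alpha_i$ are the singular values of $(I-XX^T)Y$. *)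

theory Defs
  imports Complex_Main "Jordan_Normal_Form.DL_Rank"
begin

definition vnorm :: "real vec \<Rightarrow> real" where
  "vnorm x = sqrt (scalar_prod x x)"

definition spec_norm :: "real mat \<Rightarrow> real" where
  "spec_norm M = Sup {vnorm (M *\<^sub>v x) | x. x \<in> carrier_vec (dim_col M) \<and> vnorm x = 1}"

definition orthonormal_cols :: "real mat \<Rightarrow> bool" where
  "orthonormal_cols X \<longleftrightarrow> transpose_mat X * X = 1\<^sub>m (dim_col X)"

definition col_range :: "real mat \<Rightarrow> real vec set" where
  "col_range M = {M *\<^sub>v x | x. x \<in> carrier_vec (dim_col M)}"

definition pinv :: "real mat \<Rightarrow> real mat" where
  "pinv A = (THE X. X \<in> carrier_mat (dim_col A) (dim_row A) \<and>
     A * X * A = A \<and> X * A * X = X \<and>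
     transpose_mat (A * X) = A * X \<and> transpose_mat (X * A) = X * A)"

(* s 0, ..., s (r-1) are the singular values of M (r = number of columns of M),
   listed in some order: M^T M = W diag(s^2) W^T with W orthogonal *)
definition singular_values :: "real mat \<Rightarrow> (nat \<Rightarrow> real) \<Rightarrow> bool" where
  "singular_values M s \<longleftrightarrow> (let r = dim_col M in
     (\<forall>i<r. s i \<ge> 0) \<and>
     (\<exists>W. W \<in> carrier_mat r r \<and> transpose_mat W * W = 1\<^sub>m r \<and>
        transpose_mat M * M = W * mat r r (\<lambda>(i,j). if i = j then (s i)\<^sup>2 else 0) * transpose_mat W))"

(* alpha 0 <= ... <= alpha (k-1) are the principal angles between R(X) and the
   k-dimensional subspace R(Y), where X, Y are orthonormal bases (Y has k columns):
   the sin alpha_i are the singular values of (I - X X^T) Y *)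
definition principal_angles :: "real mat \<Rightarrow> real mat \<Rightarrow> (nat \<Rightarrow> real) \<Rightarrow> bool" where
  "principal_angles X Y alpha \<longleftrightarrow>
     (\<forall>i<dim_col Y. 0 \<le> alpha i \<and> alpha i \<le> pi / 2) \<and>
     (\<forall>i j. i \<le> j \<and> j < dim_col Y \<longrightarrow> alpha i \<le> alpha j) \<and>
     singular_values ((1\<^sub>m (dim_row X) - X * transpose_mat X) * Y) (\<lambda>i. sin (alpha i))"

definition first_cols :: "real mat \<Rightarrow> nat \<Rightarrow> real mat" where
  "first_cols M k = mat (dim_row M) k (\<lambda>(i,j). M $$ (i,j))"

definition last_cols :: "real mat \<Rightarrow> nat \<Rightarrow> real mat" where
  "last_cols M k = mat (dim_row M) (dim_col M - k) (\<lambda>(i,j). M $$ (i, j + k))"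

end

theory Submission
  imports Defs
begin

text \<open>Let \<open>B = (A\<^sup>T A)\<^sup>q A\<^sup>T \<Phi>\<close>. In singular coordinates \<open>A B g = U diag(\<sigma>\<^sup>2\<^sup>q\<^sup>+\<^sup>2) U\<^sup>T \<Phi> g\<close> and
  \<open>B g = V diag(\<sigma>\<^sup>2\<^sup>q\<^sup>+\<^sup>1) U\<^sup>T \<Phi> g\<close>. Taking \<open>g = \<Phi>\<^sub>1\<^sup>\<dagger> \<Sigma>\<^sub>k\<^sup>-\<^sup>e x\<close> (with \<open>e = 2q+2\<close>, resp. \<open>2q+1\<close>) makes
  the leading \<open>k\<close> coordinates equal to \<open>x\<close>, while the trailing ones are at most
  \<open>\<sigma>\<^sub>k\<^sub>+\<^sub>1\<^sup>e \<parallel>\<Phi>\<^sub>2 \<Phi>\<^sub>1\<^sup>\<dagger>\<parallel> \<parallel>\<Sigma>\<^sub>k\<^sup>-\<^sup>e x\<parallel> \<le> \<delta>\<^sub>i\<^sup>e \<parallel>\<Phi>\<^sub>2 \<Phi>\<^sub>1\<^sup>\<dagger>\<parallel> \<parallel>x\<parallel>\<close> when \<open>x\<close> is supported on the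
  first \<open>i + 1\<close> coordinates. As \<open>\<R>(Q) \<supseteq> \<R>(A B)\<close> and \<open>\<R>(P) \<supseteq> \<R>(B)\<close>, every such \<open>U\<^sub>k x\<close>
  (resp. \<open>V\<^sub>k x\<close>) lies in the range up to an orthogonal error of relative size
  \<open>t = \<delta>\<^sub>i\<^sup>e \<parallel>\<Phi>\<^sub>2 \<Phi>\<^sub>1\<^sup>\<dagger>\<parallel>\<close>, and a Courant--Fischer argument turns this into
  \<open>sin\<^sup>2 \<theta>\<^sub>i \<le> t\<^sup>2/(1 + t\<^sup>2)\<close>, i.e. \<open>tan \<theta>\<^sub>i \<le> t\<close> and \<open>cos \<theta>\<^sub>i \<ge> 1/\<surd>(1 + t\<^sup>2)\<close>.\<close>

lemma scalar_prod_self_nonneg: "0 \<le> (x :: real vec) \<bullet> x"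
  using conjugate_square_ge_0_vec[of x] by simp

lemma scalar_prod_self_eq_0_iff:
  "(x :: real vec) \<in> carrier_vec n \<Longrightarrow> x \<bullet> x = 0 \<longleftrightarrow> x = 0\<^sub>v n"
  using conjugate_square_eq_0_vec[of x n] by simp

lemma orthonormal_cancel:
  assumes "X \<in> carrier_mat N r" and "transpose_mat X * X = 1\<^sub>m r" and "z \<in> carrier_vec r"
  shows "transpose_mat X *\<^sub>v (X *\<^sub>v z) = (z :: real vec)"
  using assms by (metis assoc_mult_mat_vec one_mult_mat_vec transpose_carrier_mat)

lemma orthonormal_scalar_prod:
  assumes X: "X \<in> carrier_mat N r" and XX: "transpose_mat X * X = 1\<^sub>m r"
    and a: "a \<in> carrier_vec r" and b: "b \<in> carrier_vec r"
  shows "(X *\<^sub>v a) \<bullet> (X *\<^sub>v b) = a \<bullet> (b :: real vec)"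
proof -
  have "(X *\<^sub>v a) \<bullet> (X *\<^sub>v b) = (transpose_mat X *\<^sub>v (X *\<^sub>v a)) \<bullet> b"
    using transpose_vec_mult_scalar[OF X b, of "X *\<^sub>v a"] X a by simp
  then show ?thesis using orthonormal_cancel[OF X XX a] by simp
qed

lemma orthogonal_right_inverse:
  assumes "W \<in> carrier_mat N N" and "transpose_mat W * W = 1\<^sub>m N"
  shows "W * transpose_mat W = (1\<^sub>m N :: real mat)"
  using mat_mult_left_right_inverse[OF _ assms(1,2)] assms(1) by simp

lemma proj_complement_sq_le:
  assumes X: "X \<in> carrier_mat N r" and XX: "transpose_mat X * X = 1\<^sub>m r"
    and u: "u \<in> carrier_vec N" and h: "h \<in> carrier_vec r"
  shows "((1\<^sub>m N - X * transpose_mat X) *\<^sub>v u) \<bullet> ((1\<^sub>m N - X * transpose_mat X) *\<^sub>v u)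
         \<le> (u - X *\<^sub>v h) \<bullet> (u - X *\<^sub>v (h :: real vec))"
proof -
  define v where "v = u - X *\<^sub>v h"
  have v: "v \<in> carrier_vec N" using u h X by (simp add: v_def)
  define a where "a = transpose_mat X *\<^sub>v v"
  have a: "a \<in> carrier_vec r" using X v by (simp add: a_def)
  have XXt: "X * transpose_mat X \<in> carrier_mat N N" using X by simp
  have "(1\<^sub>m N - X * transpose_mat X) *\<^sub>v u = u - X *\<^sub>v (transpose_mat X *\<^sub>v u)"
    using u X minus_mult_distrib_mat_vec[OF one_carrier_mat XXt u] by simp
  also have "\<dots> = v - X *\<^sub>v a"
    unfolding v_def a_def using X u h orthonormal_cancel[OF X XX h]
    by (simp add: mult_minus_distrib_mat_vec) (intro eq_vecI; auto)
  finally have proj: "(1\<^sub>m N - X * transpose_mat X) *\<^sub>v u = v - X *\<^sub>v a" .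
  have Xa: "X *\<^sub>v a \<in> carrier_vec N" using X a by simp
  have "(v - X *\<^sub>v a) \<bullet> (v - X *\<^sub>v a) = v \<bullet> v - 2 * (v \<bullet> (X *\<^sub>v a)) + (X *\<^sub>v a) \<bullet> (X *\<^sub>v a)"
    using v Xa
    by (simp add: minus_scalar_prod_distrib[of _ N] scalar_prod_minus_distrib[of _ N]
        comm_scalar_prod[of "X *\<^sub>v a" N v])
  also have "v \<bullet> (X *\<^sub>v a) = a \<bullet> a"
    using transpose_vec_mult_scalar[OF X a v] unfolding a_def by simp
  also have "(X *\<^sub>v a) \<bullet> (X *\<^sub>v a) = a \<bullet> a" using orthonormal_scalar_prod[OF X XX a a] .
  finally have "(v - X *\<^sub>v a) \<bullet> (v - X *\<^sub>v a) = v \<bullet> v - a \<bullet> a" by simp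
  then show ?thesis using proj scalar_prod_self_nonneg[of a] by (simp add: v_def)
qed

lemma sum_if_less:
  fixes f :: "nat \<Rightarrow> real"
  assumes "i \<le> k"
  shows "(\<Sum>l=0..<k. if l < i then f l else 0) = (\<Sum>l=0..<i. f l)"
  using assms by (intro sum.mono_neutral_cong_right) auto

text \<open>Dimension count: \<open>i + 1\<close> free coordinates against \<open>i\<close> linear conditions.\<close>

lemma exists_head_supported_vec_in_kernel:
  assumes W: "W \<in> carrier_mat k k" and ik: "i < k"
  shows "\<exists>x \<in> carrier_vec k. x \<bullet> x > 0 \<and> (\<forall>j. i < j \<longrightarrow> j < k \<longrightarrow> x $ j = 0)
     \<and> (\<forall>a<i. (transpose_mat W *\<^sub>v x) $ a = (0::real))"
proof -
  define C where "C = mat (Suc i) (Suc i) (\<lambda>(a,l). if a < i then W $$ (l,a) else (0::real))"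
  have C: "C \<in> carrier_mat (Suc i) (Suc i)" by (simp add: C_def)
  have "transpose_mat C *\<^sub>v unit_vec (Suc i) i = 0\<^sub>v (Suc i)"
  proof (rule eq_vecI)
    fix l assume "l < dim_vec (0\<^sub>v (Suc i) :: real vec)"
    then have l: "l < Suc i" by simp
    have "(transpose_mat C *\<^sub>v unit_vec (Suc i) i) $ l
        = (\<Sum>a=0..<Suc i. C $$ (a,l) * (if a = i then 1 else 0))"
      using l C by (simp add: scalar_prod_def unit_vec_def)
    also have "\<dots> = C $$ (i, l)" by (simp add: sum.delta' if_distrib cong: if_cong)
    also have "\<dots> = 0" using l by (simp add: C_def)
    finally show "(transpose_mat C *\<^sub>v unit_vec (Suc i) i) $ l = 0\<^sub>v (Suc i) $ l" using l by simp
  qed (use C in simp)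
  moreover have "unit_vec (Suc i) i \<noteq> (0\<^sub>v (Suc i) :: real vec)"
    by (metis index_unit_vec(1) index_zero_vec(1) lessI zero_neq_one)
  ultimately have "\<exists>v. v \<in> carrier_vec (Suc i) \<and> v \<noteq> 0\<^sub>v (Suc i) \<and> transpose_mat C *\<^sub>v v = 0\<^sub>v (Suc i)"
    using unit_vec_carrier by blast
  then have "det (transpose_mat C) = 0"
    using det_0_iff_vec_prod_zero_field[of "transpose_mat C" "Suc i"] C by simp
  then have "det C = 0" using C by (simp add: det_transpose)
  then obtain v where v: "v \<in> carrier_vec (Suc i)" "v \<noteq> 0\<^sub>v (Suc i)" "C *\<^sub>v v = 0\<^sub>v (Suc i)"
    using det_0_iff_vec_prod_zero_field[OF C] by auto
  define x where "x = vec k (\<lambda>j. if j < Suc i then v $ j else 0)"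
  have x: "x \<in> carrier_vec k" by (simp add: x_def)
  have "x \<noteq> 0\<^sub>v k"
  proof
    assume "x = 0\<^sub>v k"
    then have "v $ j = 0" if "j < Suc i" for j
    proof -
      have "x $ j = 0" using \<open>x = 0\<^sub>v k\<close> that ik by simp
      then show ?thesis using that ik by (simp add: x_def)
    qed
    then show False using v(1,2) by (metis carrier_vecD eq_vecI index_zero_vec)
  qed
  then have "x \<bullet> x > 0"
    using scalar_prod_self_nonneg[of x] scalar_prod_self_eq_0_iff[OF x] by fastforce
  moreover have "\<forall>a<i. (transpose_mat W *\<^sub>v x) $ a = 0"
  proof (intro allI impI)
    fix a assume a: "a < i"
    have "(transpose_mat W *\<^sub>v x) $ a = (\<Sum>l=0..<k. if l < Suc i then W $$ (l,a) * v $ l else 0)"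
      using a ik W by (auto simp: scalar_prod_def x_def intro: sum.cong)
    also have "\<dots> = (C *\<^sub>v v) $ a"
      using a v(1) ik by (simp add: sum_if_less C_def scalar_prod_def)
    finally show "(transpose_mat W *\<^sub>v x) $ a = 0" using v(3) a by simp
  qed
  ultimately show ?thesis using x by (auto simp: x_def)
qed

lemma quadratic_form_eigen_decomposition:
  fixes M W :: "real mat" and s :: "nat \<Rightarrow> real"
  assumes M: "M \<in> carrier_mat N k" and W: "W \<in> carrier_mat k k"
    and MM: "transpose_mat M * M = W * mat k k (\<lambda>(i,j). if i = j then (s i)\<^sup>2 else 0) * transpose_mat W"
    and x: "x \<in> carrier_vec k"
  shows "(M *\<^sub>v x) \<bullet> (M *\<^sub>v x) = (\<Sum>j=0..<k. (s j)\<^sup>2 * ((transpose_mat W *\<^sub>v x) $ j)\<^sup>2)"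
proof -
  define D where "D = mat k k (\<lambda>(i,j). if i = j then (s i)\<^sup>2 else (0::real))"
  have D: "D \<in> carrier_mat k k" by (simp add: D_def)
  have Wt: "transpose_mat W \<in> carrier_mat k k" using W by simp
  define y where "y = transpose_mat W *\<^sub>v x"
  have y: "y \<in> carrier_vec k" using Wt x by (simp add: y_def)
  have Dy: "D *\<^sub>v y = vec k (\<lambda>j. (s j)\<^sup>2 * y $ j)"
  proof (rule eq_vecI)
    fix j assume "j < dim_vec (vec k (\<lambda>j. (s j)\<^sup>2 * y $ j))"
    then have j: "j < k" by simp
    have "(D *\<^sub>v y) $ j = (\<Sum>l=0..<k. (if j = l then (s j)\<^sup>2 else 0) * y $ l)"
      using j y by (simp add: D_def scalar_prod_def)
    also have "\<dots> = (\<Sum>l=0..<k. if l = j then (s j)\<^sup>2 * y $ j else 0)"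
      by (rule sum.cong) auto
    finally show "(D *\<^sub>v y) $ j = vec k (\<lambda>j. (s j)\<^sup>2 * y $ j) $ j" using j by simp
  qed (simp add: D_def)
  have "(M *\<^sub>v x) \<bullet> (M *\<^sub>v x) = ((transpose_mat M * M) *\<^sub>v x) \<bullet> x"
    using transpose_vec_mult_scalar[OF M x, of "M *\<^sub>v x"] M x
    by (metis assoc_mult_mat_vec mult_mat_vec_carrier transpose_carrier_mat)
  also have "\<dots> = (W *\<^sub>v (D *\<^sub>v y)) \<bullet> x"
    using assoc_mult_mat_vec[OF mult_carrier_mat[OF W D] Wt x] assoc_mult_mat_vec[OF W D, of y] y
    by (simp add: MM D_def y_def)
  also have "\<dots> = (D *\<^sub>v y) \<bullet> y"
    using transpose_vec_mult_scalar[OF Wt x, of "D *\<^sub>v y"] D y by (simp add: y_def)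
  also have "\<dots> = (\<Sum>j=0..<k. (s j)\<^sup>2 * (y $ j)\<^sup>2)"
    using y by (simp add: Dy scalar_prod_def power2_eq_square mult.assoc)
  finally show ?thesis by (simp add: y_def)
qed

text \<open>One half of the Courant--Fischer characterisation of the \<open>i\<close>-th smallest singular value.\<close>

lemma singular_value_lower_witness:
  fixes M :: "real mat" and s :: "nat \<Rightarrow> real"
  assumes M: "M \<in> carrier_mat N k" and sv: "singular_values M s" and ik: "i < k"
    and s_nonneg: "0 \<le> s i" and s_mono: "\<And>j. i \<le> j \<Longrightarrow> j < k \<Longrightarrow> s i \<le> s j"
  shows "\<exists>x \<in> carrier_vec k. x \<bullet> x > 0 \<and> (\<forall>j. i < j \<longrightarrow> j < k \<longrightarrow> x $ j = 0) \<and>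
           (s i)\<^sup>2 * (x \<bullet> x) \<le> (M *\<^sub>v x) \<bullet> (M *\<^sub>v x)"
proof -
  obtain W where W: "W \<in> carrier_mat k k" and WW: "transpose_mat W * W = 1\<^sub>m k"
    and MM: "transpose_mat M * M = W * mat k k (\<lambda>(i,j). if i = j then (s i)\<^sup>2 else 0) * transpose_mat W"
    using sv M unfolding singular_values_def Let_def by auto
  have Wt: "transpose_mat W \<in> carrier_mat k k" using W by simp
  have WtWt: "transpose_mat (transpose_mat W) * transpose_mat W = 1\<^sub>m k"
    using orthogonal_right_inverse[OF W WW] by simp
  obtain x where x: "x \<in> carrier_vec k" and xpos: "x \<bullet> x > 0"
    and xz: "\<forall>j. i < j \<longrightarrow> j < k \<longrightarrow> x $ j = 0" and yz: "\<forall>a<i. (transpose_mat W *\<^sub>v x) $ a = 0"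
    using exists_head_supported_vec_in_kernel[OF W ik] by blast
  define y where "y = transpose_mat W *\<^sub>v x"
  have y: "y \<in> carrier_vec k" using Wt x by (simp add: y_def)
  have "y \<bullet> y = x \<bullet> x" using orthonormal_scalar_prod[OF Wt WtWt x x] by (simp add: y_def)
  moreover have "y \<bullet> y = (\<Sum>j=0..<k. (y $ j)\<^sup>2)" using y by (simp add: scalar_prod_def power2_eq_square)
  ultimately have "(s i)\<^sup>2 * (x \<bullet> x) = (\<Sum>j=0..<k. (s i)\<^sup>2 * (y $ j)\<^sup>2)"
    by (simp add: sum_distrib_left[symmetric])
  also have "\<dots> \<le> (\<Sum>j=0..<k. (s j)\<^sup>2 * (y $ j)\<^sup>2)"
  proof (rule sum_mono)
    fix j assume j: "j \<in> {0..<k}"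
    show "(s i)\<^sup>2 * (y $ j)\<^sup>2 \<le> (s j)\<^sup>2 * (y $ j)\<^sup>2"
    proof (cases "j < i")
      case True then show ?thesis using yz by (simp add: y_def)
    next
      case False
      then have "(s i)\<^sup>2 \<le> (s j)\<^sup>2" using s_nonneg s_mono j by (intro power_mono) auto
      then show ?thesis by (intro mult_right_mono) auto
    qed
  qed
  also have "\<dots> = (M *\<^sub>v x) \<bullet> (M *\<^sub>v x)"
    using quadratic_form_eigen_decomposition[OF M W MM x] by (simp add: y_def)
  finally show ?thesis using x xpos xz by blast
qed

lemma convex_comb_sq_le:
  fixes a b t :: real
  assumes a: "a > 0" and b: "b \<ge> 0" and bt: "b \<le> t\<^sup>2 * a"
  shows "(1 - a/(a+b))\<^sup>2 * a + (a/(a+b))\<^sup>2 * b \<le> a * (t\<^sup>2 / (1 + t\<^sup>2))"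
proof -
  have ab: "a + b > 0" using a b by simp
  have "b * (1 + t\<^sup>2) \<le> t\<^sup>2 * (a + b)" using bt by (simp add: algebra_simps)
  then have frac: "b / (a + b) \<le> t\<^sup>2 / (1 + t\<^sup>2)"
    using ab by (simp add: divide_simps add_pos_nonneg mult.commute)
  have "(1 - a/(a+b))\<^sup>2 * a + (a/(a+b))\<^sup>2 * b = (b/(a+b))\<^sup>2 * a + (a/(a+b))\<^sup>2 * b"
    using ab by (simp add: field_simps)
  also have "\<dots> = (a * b * (a + b)) / ((a+b) * (a+b))"
    using ab by (simp add: power_divide power2_eq_square add_divide_distrib[symmetric] algebra_simps)
  also have "\<dots> = a * (b / (a + b))" using ab by simp
  also have "\<dots> \<le> a * (t\<^sup>2 / (1 + t\<^sup>2))" using frac a by (intro mult_left_mono) auto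
  finally show ?thesis .
qed

text \<open>The bound comes from comparing \<open>(I - X X\<^sup>T) Y x\<close> with \<open>Y x - \<beta> X h\<close> for the
  optimal scalar \<open>\<beta> = \<parallel>x\<parallel>\<^sup>2 / (\<parallel>x\<parallel>\<^sup>2 + \<parallel>w\<parallel>\<^sup>2)\<close>.\<close>

lemma principal_angle_sin_sq_le:
  fixes X Y :: "real mat" and \<alpha> :: "nat \<Rightarrow> real" and t :: real
  assumes X: "X \<in> carrier_mat N r" and XX: "transpose_mat X * X = 1\<^sub>m r"
    and Y: "Y \<in> carrier_mat N k" and YY: "transpose_mat Y * Y = 1\<^sub>m k"
    and pa: "principal_angles X Y \<alpha>" and ik: "i < k"
    and reach: "\<And>x. x \<in> carrier_vec k \<Longrightarrow> (\<forall>j. i < j \<longrightarrow> j < k \<longrightarrow> x $ j = 0) \<Longrightarrow>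
          \<exists>h w. h \<in> carrier_vec r \<and> w \<in> carrier_vec N \<and> X *\<^sub>v h = Y *\<^sub>v x + w \<and>
                (Y *\<^sub>v x) \<bullet> w = 0 \<and> w \<bullet> w \<le> t\<^sup>2 * (x \<bullet> x)"
  shows "(sin (\<alpha> i))\<^sup>2 \<le> t\<^sup>2 / (1 + t\<^sup>2)"
proof -
  define M where "M = (1\<^sub>m N - X * transpose_mat X) * Y"
  have P: "1\<^sub>m N - X * transpose_mat X \<in> carrier_mat N N" using X by auto
  have M: "M \<in> carrier_mat N k" using P Y by (simp add: M_def)
  have ang: "\<forall>j<k. 0 \<le> \<alpha> j \<and> \<alpha> j \<le> pi / 2"
    and mono: "\<forall>i j. i \<le> j \<and> j < k \<longrightarrow> \<alpha> i \<le> \<alpha> j"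
    and sv: "singular_values M (\<lambda>i. sin (\<alpha> i))"
    using pa X Y unfolding principal_angles_def M_def by auto
  have "0 \<le> sin (\<alpha> i)" using ang ik by (intro sin_ge_zero) auto
  moreover have "sin (\<alpha> i) \<le> sin (\<alpha> j)" if "i \<le> j" "j < k" for j
  proof -
    have "0 \<le> \<alpha> i" "\<alpha> i \<le> \<alpha> j" "\<alpha> j \<le> pi/2" using ang mono that ik by auto
    then show ?thesis by (intro sin_monotone_2pi_le) auto
  qed
  ultimately obtain x where x: "x \<in> carrier_vec k" and xpos: "x \<bullet> x > 0"
    and xz: "\<forall>j. i < j \<longrightarrow> j < k \<longrightarrow> x $ j = 0"
    and lower: "(sin (\<alpha> i))\<^sup>2 * (x \<bullet> x) \<le> (M *\<^sub>v x) \<bullet> (M *\<^sub>v x)"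
    using singular_value_lower_witness[OF M sv ik] by blast
  obtain h w where h: "h \<in> carrier_vec r" and w: "w \<in> carrier_vec N"
    and hw: "X *\<^sub>v h = Y *\<^sub>v x + w" and orth: "(Y *\<^sub>v x) \<bullet> w = 0" and wb: "w \<bullet> w \<le> t\<^sup>2 * (x \<bullet> x)"
    using reach[OF x xz] by blast
  define p where "p = Y *\<^sub>v x"
  have p: "p \<in> carrier_vec N" using Y x by (simp add: p_def)
  have pp: "p \<bullet> p = x \<bullet> x" using orthonormal_scalar_prod[OF Y YY x x] by (simp add: p_def)
  define \<beta> where "\<beta> = (x \<bullet> x) / (x \<bullet> x + w \<bullet> w)"
  have "M *\<^sub>v x = (1\<^sub>m N - X * transpose_mat X) *\<^sub>v p"
    using P Y x by (simp add: M_def p_def)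
  then have "(M *\<^sub>v x) \<bullet> (M *\<^sub>v x) \<le> (p - X *\<^sub>v (\<beta> \<cdot>\<^sub>v h)) \<bullet> (p - X *\<^sub>v (\<beta> \<cdot>\<^sub>v h))"
    using proj_complement_sq_le[OF X XX p, of "\<beta> \<cdot>\<^sub>v h"] h by simp
  also have "X *\<^sub>v (\<beta> \<cdot>\<^sub>v h) = \<beta> \<cdot>\<^sub>v (p + w)"
    using X h hw by (simp add: mult_mat_vec p_def)
  also have "(p - \<beta> \<cdot>\<^sub>v (p + w)) \<bullet> (p - \<beta> \<cdot>\<^sub>v (p + w))
      = (1-\<beta>)\<^sup>2 * (p \<bullet> p) - 2 * ((1-\<beta>) * \<beta>) * (p \<bullet> w) + \<beta>\<^sup>2 * (w \<bullet> w)"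
    using p w by (simp add: scalar_prod_def sum.distrib sum_subtractf sum_distrib_left
        power2_eq_square algebra_simps)
  also have "\<dots> = (1-\<beta>)\<^sup>2 * (x \<bullet> x) + \<beta>\<^sup>2 * (w \<bullet> w)"
    using orth pp by (simp add: p_def)
  also have "\<dots> \<le> (x \<bullet> x) * (t\<^sup>2 / (1 + t\<^sup>2))"
    unfolding \<beta>_def by (rule convex_comb_sq_le[OF xpos scalar_prod_self_nonneg wb])
  finally have "(x \<bullet> x) * (sin (\<alpha> i))\<^sup>2 \<le> (x \<bullet> x) * (t\<^sup>2 / (1 + t\<^sup>2))"
    using lower by (simp add: mult.commute)
  then show ?thesis using xpos mult_le_cancel_left_pos by blast
qed

lemma cos_tan_bound_of_sin_sq_le:
  fixes a t :: real
  assumes a: "0 \<le> a" "a \<le> pi/2" and t: "t \<ge> 0" and s: "(sin a)\<^sup>2 \<le> t\<^sup>2 / (1 + t\<^sup>2)"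
  shows "cos a \<ge> 1 / sqrt (1 + t\<^sup>2) \<and> tan a \<le> t"
proof -
  have t1: "1 + t\<^sup>2 > 0" by (simp add: add_pos_nonneg)
  have s2: "(sin a)\<^sup>2 * (1 + t\<^sup>2) \<le> t\<^sup>2" using s t1 by (simp add: pos_le_divide_eq)
  have c2: "(cos a)\<^sup>2 = 1 - (sin a)\<^sup>2" by (simp add: cos_squared_eq)
  have cpos: "cos a \<ge> 0" using a by (intro cos_ge_zero) auto
  have "(cos a)\<^sup>2 * (1 + t\<^sup>2) \<ge> 1" using s2 by (simp add: c2 algebra_simps)
  then have "(cos a)\<^sup>2 \<ge> 1 / (1 + t\<^sup>2)" using t1 by (simp add: pos_divide_le_eq)
  then have "sqrt ((cos a)\<^sup>2) \<ge> sqrt (1 / (1 + t\<^sup>2))" by (rule real_sqrt_le_mono)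
  then have cb: "cos a \<ge> 1 / sqrt (1 + t\<^sup>2)" using cpos by (simp add: real_sqrt_divide)
  have "1 / sqrt (1 + t\<^sup>2) > 0" using t1 by simp
  then have cgt: "cos a > 0" using cb by linarith
  have "(sin a)\<^sup>2 \<le> t\<^sup>2 * (cos a)\<^sup>2" using s2 by (simp add: c2 algebra_simps)
  then have "(tan a)\<^sup>2 \<le> t\<^sup>2" using cgt by (simp add: tan_def power_divide pos_divide_le_eq)
  then have "tan a \<le> t" using t by (rule power2_le_imp_le)
  with cb show ?thesis by simp
qed
lemma vnorm_nonneg: "vnorm x \<ge> 0"
  by (simp add: vnorm_def scalar_prod_self_nonneg)

lemma vnorm_sq: "(vnorm x)\<^sup>2 = x \<bullet> x"
  by (simp add: vnorm_def scalar_prod_self_nonneg)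

lemma vnorm_smult: "vnorm (c \<cdot>\<^sub>v y) = \<bar>c\<bar> * vnorm (y :: real vec)"
proof -
  have "(c \<cdot>\<^sub>v y) \<bullet> (c \<cdot>\<^sub>v y) = c^2 * (y \<bullet> y)"
    by (simp add: scalar_prod_def sum_distrib_left power2_eq_square algebra_simps)
  then show ?thesis by (simp add: vnorm_def real_sqrt_mult)
qed

lemma entry_le_vnorm: assumes "j < dim_vec x" shows "\<bar>x $ j\<bar> \<le> vnorm (x :: real vec)"
proof -
  have "x $ j * x $ j \<le> (\<Sum>i=0..<dim_vec x. x $ i * x $ i)"
    by (rule member_le_sum) (use assms in auto)
  then have "(x $ j)^2 \<le> x \<bullet> x" by (simp add: scalar_prod_def power2_eq_square)
  then have "sqrt ((x $ j)^2) \<le> sqrt (x \<bullet> x)" by (rule real_sqrt_le_mono)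
  then show ?thesis by (simp add: vnorm_def)
qed

lemma spec_norm_bdd_above:
  assumes M: "M \<in> carrier_mat a b"
  shows "bdd_above {vnorm (M *\<^sub>v x) | x. x \<in> carrier_vec (dim_col M) \<and> vnorm x = 1}"
proof -
  define Bt where "Bt = (\<Sum>i=0..<a. \<Sum>j=0..<b. \<bar>M $$ (i,j)\<bar>)"
  have "vnorm (M *\<^sub>v x) \<le> sqrt (real a * Bt^2)" if x: "x \<in> carrier_vec b" "vnorm x = 1" for x
  proof -
    have ent: "\<bar>(M *\<^sub>v x) $ i\<bar> \<le> Bt" if i: "i < a" for i
    proof -
      have "\<bar>(M *\<^sub>v x) $ i\<bar> = \<bar>\<Sum>j=0..<b. M $$ (i,j) * x $ j\<bar>"
        using M x i by (simp add: scalar_prod_def)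
      also have "\<dots> \<le> (\<Sum>j=0..<b. \<bar>M $$ (i,j) * x $ j\<bar>)" by (rule sum_abs)
      also have "\<dots> \<le> (\<Sum>j=0..<b. \<bar>M $$ (i,j)\<bar>)"
      proof (rule sum_mono)
        fix j assume j: "j \<in> {0..<b}"
        have "\<bar>x $ j\<bar> \<le> 1" using entry_le_vnorm[of j x] x j by simp
        then show "\<bar>M $$ (i,j) * x $ j\<bar> \<le> \<bar>M $$ (i,j)\<bar>"
          by (simp add: abs_mult mult_left_le)
      qed
      also have "\<dots> \<le> Bt" unfolding Bt_def
        by (rule member_le_sum[where f="\<lambda>i. \<Sum>j=0..<b. \<bar>M $$ (i,j)\<bar>"]) (use i in \<open>auto intro: sum_nonneg\<close>)
      finally show ?thesis .
    qed
    have "(M *\<^sub>v x) \<bullet> (M *\<^sub>v x) = (\<Sum>i=0..<a. ((M *\<^sub>v x) $ i)^2)"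
      using M by (simp add: scalar_prod_def power2_eq_square)
    also have "\<dots> \<le> (\<Sum>i=0..<a. Bt^2)"
    proof (rule sum_mono)
      fix i assume "i \<in> {0..<a}"
      then have "\<bar>(M *\<^sub>v x) $ i\<bar> \<le> Bt" using ent by auto
      then show "((M *\<^sub>v x) $ i)^2 \<le> Bt^2"
        by (metis abs_ge_zero order_trans power2_abs power_mono)
    qed
    also have "\<dots> = real a * Bt^2" by simp
    finally show ?thesis unfolding vnorm_def by (rule real_sqrt_le_mono)
  qed
  then show ?thesis using M unfolding bdd_above_def by auto
qed

lemma spec_norm_mult_vec_le:
  assumes M: "M \<in> carrier_mat a b" and u: "u \<in> carrier_vec b"
  shows "vnorm (M *\<^sub>v u) \<le> spec_norm M * vnorm u"
proof (cases "vnorm u = 0")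
  case True
  then have "u \<bullet> u = 0" using vnorm_sq[of u] by simp
  then have "u = 0\<^sub>v b" using scalar_prod_self_eq_0_iff[OF u] by simp
  then have "M *\<^sub>v u = 0\<^sub>v a" using M by auto
  then show ?thesis using True by (simp add: vnorm_def scalar_prod_def)
next
  case False
  then have np: "vnorm u > 0" using vnorm_nonneg[of u] by simp
  define u' where "u' = (1 / vnorm u) \<cdot>\<^sub>v u"
  have u': "u' \<in> carrier_vec (dim_col M)" using u M by (simp add: u'_def)
  have "vnorm u' = 1" using np by (simp add: u'_def vnorm_smult)
  then have "vnorm (M *\<^sub>v u') \<in> {vnorm (M *\<^sub>v x) | x. x \<in> carrier_vec (dim_col M) \<and> vnorm x = 1}"
    using u' by blast
  then have "vnorm (M *\<^sub>v u') \<le> spec_norm M"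
    unfolding spec_norm_def by (rule cSup_upper[OF _ spec_norm_bdd_above[OF M]])
  moreover have "vnorm (M *\<^sub>v u') = vnorm (M *\<^sub>v u) / vnorm u"
    using M u np by (simp add: u'_def mult_mat_vec vnorm_smult)
  ultimately show ?thesis using np by (simp add: pos_divide_le_eq)
qed

lemma spec_norm_nonneg:
  assumes M: "M \<in> carrier_mat a b" and b: "b > 0"
  shows "spec_norm M \<ge> 0"
proof -
  have "unit_vec b 0 \<in> carrier_vec (dim_col M)" using M by simp
  moreover have "vnorm (unit_vec b 0) = 1"
    using b by (simp add: vnorm_def scalar_prod_def unit_vec_def sum.delta' if_distrib cong: if_cong)
  ultimately have "vnorm (M *\<^sub>v unit_vec b 0) \<in> {vnorm (M *\<^sub>v x) | x. x \<in> carrier_vec (dim_col M) \<and> vnorm x = 1}"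
    by blast
  then have "vnorm (M *\<^sub>v unit_vec b 0) \<le> spec_norm M"
    unfolding spec_norm_def by (rule cSup_upper[OF _ spec_norm_bdd_above[OF M]])
  then show ?thesis using vnorm_nonneg order_trans by blast
qed

lemma spec_norm_mult_vec_sq_le:
  assumes M: "M \<in> carrier_mat a b" and u: "u \<in> carrier_vec b"
  shows "(M *\<^sub>v u) \<bullet> (M *\<^sub>v u) \<le> (spec_norm M)^2 * (u \<bullet> u)"
proof -
  have "vnorm (M *\<^sub>v u) \<le> spec_norm M * vnorm u" by (rule spec_norm_mult_vec_le[OF M u])
  then have "(vnorm (M *\<^sub>v u))^2 \<le> (spec_norm M * vnorm u)^2"
    using vnorm_nonneg by (intro power_mono) auto
  then show ?thesis by (simp add: vnorm_sq power_mult_distrib)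
qed


lemma (in vec_space) full_rank_transpose_kernel_trivial:
  assumes A: "A \<in> carrier_mat n nc" and r: "rank A = n" and v: "v \<in> carrier_vec n"
    and Av: "transpose_mat A *\<^sub>v v = 0\<^sub>v nc"
  shows "v = 0\<^sub>v n"
proof (rule ccontr)
  assume vnz: "v \<noteq> 0\<^sub>v n"
  have "lin_indpt {}"
    by (metis (no_types) empty_subsetI fin_dim finite_basis_exists subset_li_is_li vec_vs vectorspace.basis_def)
  then obtain S where Sfin: "finite S" and Smax: "maximal S (\<lambda>T. T \<subseteq> set (cols A) \<and> lin_indpt T)"
    using maximal_exists_superset[of "set (cols A)" "(\<lambda>T. T \<subseteq> set (cols A) \<and> lin_indpt T)" "{}"]
    by auto
  have cardS: "card S = n" using rank_card_indpt[OF A Smax] r by simp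
  have Ssub: "S \<subseteq> set (cols A)" and Sind: "lin_indpt S" using Smax unfolding maximal_def by auto
  obtain xs where xs: "set xs = S" "distinct xs" using finite_distinct_list[OF Sfin] by blast
  have lxs: "length xs = n" using xs cardS distinct_card by fastforce
  have xsc: "set xs \<subseteq> carrier_vec n" using xs Ssub cols_dim A by blast
  define C where "C = mat_of_cols n xs"
  have C: "C \<in> carrier_mat n n" using lxs by (simp add: C_def) (metis mat_of_cols_carrier(1))
  have colsC: "cols C = xs" using xsc by (simp add: C_def)
  have "rank C = n" using lin_indpt_full_rank[OF C] colsC xs Sind by simp
  then have dC: "det C \<noteq> 0" using det_rank_iff[OF C] by simp
  have "transpose_mat C *\<^sub>v v = 0\<^sub>v n"
  proof (rule eq_vecI)
    fix j assume "j < dim_vec (0\<^sub>v n :: 'a vec)"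
    then have j: "j < n" by simp
    have "xs ! j \<in> set (cols A)" using Ssub xs j lxs by (metis nth_mem subsetD)
    then obtain l where l: "l < nc" "xs ! j = col A l" using A
      by (metis cols_length cols_nth in_set_conv_nth carrier_matD(2))
    have "(transpose_mat C *\<^sub>v v) $ j = col C j \<bullet> v" using C j by simp
    also have "col C j = xs ! j" using colsC j C by (metis cols_nth carrier_matD(2))
    also have "\<dots> \<bullet> v = (transpose_mat A *\<^sub>v v) $ l" using A l by simp
    also have "\<dots> = 0" using Av l by simp
    finally show "(transpose_mat C *\<^sub>v v) $ j = 0\<^sub>v n $ j" using j by simp
  qed (use C in simp)
  then have "det (transpose_mat C) = 0"
    using det_0_iff_vec_prod_zero_field[of "transpose_mat C" n] C v vnz by auto
  then show False using dC C by (simp add: det_transpose)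
qed

text \<open>\<open>F X = I\<close> follows from \<open>F X F = F\<close>, and \<open>X = X F X = F\<^sup>T X\<^sup>T X\<close> then pins \<open>X\<^sup>T X\<close>
  down to \<open>(F F\<^sup>T)\<inverse>\<close>.\<close>

lemma penrose_solution_full_row_rank:
  fixes F X Bi :: "real mat"
  assumes F: "F \<in> carrier_mat k d" and X: "X \<in> carrier_mat d k" and Bi: "Bi \<in> carrier_mat k k"
    and inv: "F * transpose_mat F * Bi = 1\<^sub>m k" "Bi * (F * transpose_mat F) = 1\<^sub>m k"
    and x1: "F * X * F = F" and x2: "X * F * X = X" and x4: "transpose_mat (X * F) = X * F"
  shows "X = transpose_mat F * Bi"
proof -
  have Ft: "transpose_mat F \<in> carrier_mat d k" using F by simp
  have Xt: "transpose_mat X \<in> carrier_mat k d" using X by simp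
  have "F * X = F * X * (F * transpose_mat F * Bi)" using inv(1) F X by simp
  also have "\<dots> = (F * X * F) * (transpose_mat F * Bi)"
    by (simp only: assoc_mult_mat[OF F Ft Bi]
        assoc_mult_mat[OF mult_carrier_mat[OF F X] F mult_carrier_mat[OF Ft Bi]])
  finally have FX: "F * X = 1\<^sub>m k"
    using x1 inv(1) assoc_mult_mat[OF F Ft Bi] by simp
  have "X = transpose_mat (X * F) * X" using x2 x4 by simp
  also have "\<dots> = transpose_mat F * (transpose_mat X * X)"
    using F X Ft Xt by (simp add: transpose_mult assoc_mult_mat[of _ d k])
  finally have XZ: "X = transpose_mat F * (transpose_mat X * X)" .
  have "transpose_mat X * X = Bi * (F * transpose_mat F) * (transpose_mat X * X)"
    using inv(2) X by simp
  also have "\<dots> = Bi * (F * (transpose_mat F * (transpose_mat X * X)))"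
    using assoc_mult_mat[OF Bi mult_carrier_mat[OF F Ft] mult_carrier_mat[OF Xt X]]
      assoc_mult_mat[OF F Ft mult_carrier_mat[OF Xt X]] by simp
  also have "\<dots> = Bi * (F * X)" using arg_cong[where f="\<lambda>Y. Bi * (F * Y)", OF XZ] by simp
  finally have "transpose_mat X * X = Bi" using FX Bi by simp
  then show ?thesis using XZ by simp
qed

lemma gram_invertible_of_full_rank:
  fixes F :: "real mat"
  assumes F: "F \<in> carrier_mat k d" and rank: "vec_space.rank k F = k"
  shows "\<exists>Bi \<in> carrier_mat k k. F * transpose_mat F * Bi = 1\<^sub>m k \<and> Bi * (F * transpose_mat F) = 1\<^sub>m k"
proof -
  have Ft: "transpose_mat F \<in> carrier_mat d k" using F by simp
  define B where "B = F * transpose_mat F"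
  have B: "B \<in> carrier_mat k k" using F by (simp add: B_def)
  have "det B \<noteq> 0"
  proof
    assume "det B = 0"
    then obtain v where v: "v \<in> carrier_vec k" "v \<noteq> 0\<^sub>v k" "B *\<^sub>v v = 0\<^sub>v k"
      using det_0_iff_vec_prod_zero_field[OF B] by auto
    have Fv: "transpose_mat F *\<^sub>v v \<in> carrier_vec d" using Ft v by simp
    have "(transpose_mat F *\<^sub>v v) \<bullet> (transpose_mat F *\<^sub>v v) = (B *\<^sub>v v) \<bullet> v"
      using transpose_vec_mult_scalar[OF Ft v(1) Fv] F Ft v by (simp add: B_def)
    then have "transpose_mat F *\<^sub>v v = 0\<^sub>v d" using v scalar_prod_self_eq_0_iff[OF Fv] by simp
    then show False using vec_space.full_rank_transpose_kernel_trivial[OF F rank v(1)] v(2) by blast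
  qed
  define Bi where "Bi = (1 / det B) \<cdot>\<^sub>m adj_mat B"
  have Bi: "Bi \<in> carrier_mat k k" using adj_mat(1)[OF B] by (simp add: Bi_def)
  have BBi: "B * Bi = 1\<^sub>m k"
    using adj_mat(2)[OF B] \<open>det B \<noteq> 0\<close> mult_smult_distrib[OF B adj_mat(1)[OF B]]
    by (auto simp: Bi_def intro!: eq_matI)
  then show ?thesis using mat_mult_left_right_inverse[OF B Bi BBi] Bi by (auto simp: B_def)
qed

lemma pinv_right_inverse:
  fixes F :: "real mat"
  assumes F: "F \<in> carrier_mat k d" and rank: "vec_space.rank k F = k"
  shows "pinv F \<in> carrier_mat d k \<and> F * pinv F = 1\<^sub>m k"
proof -
  have Ft: "transpose_mat F \<in> carrier_mat d k" using F by simp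
  define B where "B = F * transpose_mat F"
  have B: "B \<in> carrier_mat k k" using F by (simp add: B_def)
  obtain Bi where Bi: "Bi \<in> carrier_mat k k" and BBi: "B * Bi = 1\<^sub>m k" and BiB: "Bi * B = 1\<^sub>m k"
    using gram_invertible_of_full_rank[OF F rank] unfolding B_def by blast
  have Bsym: "transpose_mat B = B" using transpose_mult[OF F Ft] by (simp add: B_def)
  have "transpose_mat Bi * B = 1\<^sub>m k" using transpose_mult[OF B Bi] BBi Bsym by simp
  then have Bisym: "transpose_mat Bi = Bi"
    using assoc_mult_mat[of "transpose_mat Bi" k k B k Bi] BBi Bi B by simp
  define G where "G = transpose_mat F * Bi"
  have G: "G \<in> carrier_mat d k" using Ft Bi by (simp add: G_def)
  have FG: "F * G = 1\<^sub>m k" using assoc_mult_mat[OF F Ft Bi] BBi by (simp add: G_def B_def)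
  have "transpose_mat (G * F) = G * F"
    using transpose_mult[OF G F] transpose_mult[OF Ft Bi] Bisym assoc_mult_mat[OF Ft Bi F]
    by (simp add: G_def)
  then have "G \<in> carrier_mat d k \<and> F * G * F = F \<and> G * F * G = G \<and>
      transpose_mat (F * G) = F * G \<and> transpose_mat (G * F) = G * F"
    using G F FG assoc_mult_mat[OF G F G] by simp
  moreover have "X = G" if "X \<in> carrier_mat d k \<and> F * X * F = F \<and>
      X * F * X = X \<and> transpose_mat (F * X) = F * X \<and> transpose_mat (X * F) = X * F" for X
    using penrose_solution_full_row_rank[OF F _ Bi BBi[unfolded B_def] BiB[unfolded B_def]] that
    unfolding G_def by blast
  ultimately have "pinv F = G" using F unfolding pinv_def by (intro the_equality) blast+
  then show ?thesis using G FG by simp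
qed
lemma diag_transpose_mult_vec:
  assumes Sig: "\<Sigma> \<in> carrier_mat m n" "\<forall>i<m. \<forall>j<n. \<Sigma> $$ (i,j) = (if i = j then \<sigma> i else 0)"
    and nm: "n \<le> m" and u: "u \<in> carrier_vec m"
  shows "transpose_mat \<Sigma> *\<^sub>v u = vec n (\<lambda>j. \<sigma> j * u $ j :: real)"
proof (rule eq_vecI)
  fix j assume "j < dim_vec (vec n (\<lambda>j. \<sigma> j * u $ j))"
  then have j: "j < n" by simp
  have "(transpose_mat \<Sigma> *\<^sub>v u) $ j = (\<Sum>l=0..<m. \<Sigma> $$ (l, j) * u $ l)"
    using Sig(1) u j by (simp add: scalar_prod_def)
  also have "\<dots> = (\<Sum>l=0..<m. if l = j then \<sigma> j * u $ j else 0)"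
    by (rule sum.cong) (use Sig(2) j in auto)
  also have "\<dots> = \<sigma> j * u $ j" using j nm by simp
  finally show "(transpose_mat \<Sigma> *\<^sub>v u) $ j = vec n (\<lambda>j. \<sigma> j * u $ j) $ j" using j by simp
qed (use Sig in simp)

lemma diag_mult_vec:
  assumes Sig: "\<Sigma> \<in> carrier_mat m n" "\<forall>i<m. \<forall>j<n. \<Sigma> $$ (i,j) = (if i = j then \<sigma> i else 0)"
    and v: "v \<in> carrier_vec n"
  shows "\<Sigma> *\<^sub>v v = vec m (\<lambda>j. if j < n then \<sigma> j * v $ j else 0 :: real)"
proof (rule eq_vecI)
  fix j assume "j < dim_vec (vec m (\<lambda>j. if j < n then \<sigma> j * v $ j else 0 :: real))"
  then have j: "j < m" by simp
  have "(\<Sigma> *\<^sub>v v) $ j = (\<Sum>l=0..<n. \<Sigma> $$ (j, l) * v $ l)"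
    using Sig(1) v j by (simp add: scalar_prod_def)
  also have "\<dots> = (\<Sum>l=0..<n. if l = j then \<sigma> j * v $ j else 0)"
    by (rule sum.cong) (use Sig(2) j in auto)
  also have "\<dots> = (if j < n then \<sigma> j * v $ j else 0)" by simp
  finally show "(\<Sigma> *\<^sub>v v) $ j = vec m (\<lambda>j. if j < n then \<sigma> j * v $ j else 0) $ j" using j by simp
qed (use Sig in simp)

locale svd_setting =
  fixes m n :: nat and A U \<Sigma> V :: "real mat" and \<sigma> :: "nat \<Rightarrow> real"
  assumes nm: "n \<le> m"
    and U: "U \<in> carrier_mat m m" "transpose_mat U * U = 1\<^sub>m m"
    and V: "V \<in> carrier_mat n n" "transpose_mat V * V = 1\<^sub>m n"
    and Sig: "\<Sigma> \<in> carrier_mat m n" "\<forall>i<m. \<forall>j<n. \<Sigma> $$ (i,j) = (if i = j then \<sigma> i else 0)"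
    and svd: "A = U * \<Sigma> * transpose_mat V"
    and sig_ord: "\<forall>i j. i \<le> j \<and> j < n \<longrightarrow> \<sigma> j \<le> \<sigma> i"
    and sig_nn: "\<forall>i<n. \<sigma> i \<ge> 0"
begin

lemma A_carrier: "A \<in> carrier_mat m n" using U V Sig by (simp add: svd)

lemma transpose_A_mult_vec:
  assumes y: "y \<in> carrier_vec m"
  shows "transpose_mat A *\<^sub>v y = V *\<^sub>v vec n (\<lambda>j. \<sigma> j * (transpose_mat U *\<^sub>v y) $ j)"
proof -
  have "transpose_mat A = V * transpose_mat \<Sigma> * transpose_mat U"
  proof -
    have "transpose_mat A = transpose_mat (transpose_mat V) * transpose_mat (U * \<Sigma>)"
      using transpose_mult[OF mult_carrier_mat[OF U(1) Sig(1)], of "transpose_mat V" n] V by (simp add: svd)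
    also have "transpose_mat (U * \<Sigma>) = transpose_mat \<Sigma> * transpose_mat U"
      using transpose_mult[OF U(1) Sig(1)] .
    finally show ?thesis using V U Sig by simp
  qed
  moreover have St: "transpose_mat \<Sigma> \<in> carrier_mat n m" using Sig by simp
  moreover have Ut: "transpose_mat U \<in> carrier_mat m m" using U by simp
  ultimately have "transpose_mat A *\<^sub>v y = V *\<^sub>v (transpose_mat \<Sigma> *\<^sub>v (transpose_mat U *\<^sub>v y))"
    using assoc_mult_mat_vec[OF mult_carrier_mat[OF V(1) St] Ut y] assoc_mult_mat_vec[OF V(1) St, of "transpose_mat U *\<^sub>v y"] Ut y
    by simp
  also have "transpose_mat \<Sigma> *\<^sub>v (transpose_mat U *\<^sub>v y) = vec n (\<lambda>j. \<sigma> j * (transpose_mat U *\<^sub>v y) $ j)"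
    using diag_transpose_mult_vec[OF Sig nm, of "transpose_mat U *\<^sub>v y"] U y by simp
  finally show ?thesis .
qed

lemma A_mult_vec:
  assumes v: "v \<in> carrier_vec n"
  shows "A *\<^sub>v v = U *\<^sub>v vec m (\<lambda>j. if j < n then \<sigma> j * (transpose_mat V *\<^sub>v v) $ j else 0)"
proof -
  have Vt: "transpose_mat V \<in> carrier_mat n n" using V by simp
  have "A *\<^sub>v v = U *\<^sub>v (\<Sigma> *\<^sub>v (transpose_mat V *\<^sub>v v))"
    unfolding svd using assoc_mult_mat_vec[OF mult_carrier_mat[OF U(1) Sig(1)] Vt v] assoc_mult_mat_vec[OF U(1) Sig(1), of "transpose_mat V *\<^sub>v v"] Vt v
    by simp
  also have "\<Sigma> *\<^sub>v (transpose_mat V *\<^sub>v v) = vec m (\<lambda>j. if j < n then \<sigma> j * (transpose_mat V *\<^sub>v v) $ j else 0)"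
    using diag_mult_vec[OF Sig, of "transpose_mat V *\<^sub>v v"] V v by simp
  finally show ?thesis .
qed

lemma gram_power_mult_vec:
  assumes v: "v \<in> carrier_vec n"
  shows "(transpose_mat A * A) ^\<^sub>m q *\<^sub>v v = V *\<^sub>v vec n (\<lambda>j. \<sigma> j ^ (2*q) * (transpose_mat V *\<^sub>v v) $ j)"
  using v
proof (induction q arbitrary: v)
  case 0
  have AtA: "transpose_mat A * A \<in> carrier_mat n n" using A_carrier by simp
  have "vec n (\<lambda>j. \<sigma> j ^ (2*0) * (transpose_mat V *\<^sub>v v) $ j) = transpose_mat V *\<^sub>v v"
    using V 0 by (intro eq_vecI) auto
  moreover have "V *\<^sub>v (transpose_mat V *\<^sub>v v) = v"
    using orthonormal_cancel[of "transpose_mat V" n n v] V orthogonal_right_inverse[OF V] 0 by simp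
  moreover have "dim_col A = n" using A_carrier by simp
  ultimately show ?case using AtA 0 by simp
next
  case (Suc q)
  have AtA: "transpose_mat A * A \<in> carrier_mat n n" using A_carrier by simp
  define a where "a = vec n (\<lambda>j. \<sigma> j ^ 2 * (transpose_mat V *\<^sub>v v) $ j)"
  have a: "a \<in> carrier_vec n" by (simp add: a_def)
  have Av: "A *\<^sub>v v \<in> carrier_vec m" using A_carrier Suc.prems by simp
  have "(transpose_mat A * A) *\<^sub>v v = transpose_mat A *\<^sub>v (A *\<^sub>v v)"
    using A_carrier Suc.prems by (metis assoc_mult_mat_vec transpose_carrier_mat)
  also have "\<dots> = V *\<^sub>v vec n (\<lambda>j. \<sigma> j * (transpose_mat U *\<^sub>v (A *\<^sub>v v)) $ j)"
    by (rule transpose_A_mult_vec[OF Av])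
  also have "transpose_mat U *\<^sub>v (A *\<^sub>v v) = vec m (\<lambda>j. if j < n then \<sigma> j * (transpose_mat V *\<^sub>v v) $ j else 0)"
    using A_mult_vec[OF Suc.prems] orthonormal_cancel[OF U] by simp
  also have "vec n (\<lambda>j. \<sigma> j * vec m (\<lambda>j. if j < n then \<sigma> j * (transpose_mat V *\<^sub>v v) $ j else 0) $ j) = a"
    unfolding a_def using nm by (intro eq_vecI) (auto simp: power2_eq_square)
  finally have e1: "(transpose_mat A * A) *\<^sub>v v = V *\<^sub>v a" .
  have "(transpose_mat A * A) ^\<^sub>m Suc q *\<^sub>v v = (transpose_mat A * A) ^\<^sub>m q *\<^sub>v ((transpose_mat A * A) *\<^sub>v v)"
    using assoc_mult_mat_vec[OF pow_carrier_mat[OF AtA] AtA Suc.prems] by simp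
  also have "\<dots> = V *\<^sub>v vec n (\<lambda>j. \<sigma> j ^ (2*q) * (transpose_mat V *\<^sub>v (V *\<^sub>v a)) $ j)"
    using Suc.IH[of "V *\<^sub>v a"] V a e1 by simp
  also have "transpose_mat V *\<^sub>v (V *\<^sub>v a) = a" using orthonormal_cancel[OF V a] .
  also have "vec n (\<lambda>j. \<sigma> j ^ (2*q) * a $ j) = vec n (\<lambda>j. \<sigma> j ^ (2 * Suc q) * (transpose_mat V *\<^sub>v v) $ j)"
    unfolding a_def by (intro eq_vecI) (auto simp: power_add power2_eq_square)
  finally show ?case .
qed


lemma sketch_mult_vec:
  assumes Phi: "\<Phi> \<in> carrier_mat m d" and g: "g \<in> carrier_vec d"
  shows "((transpose_mat A * A) ^\<^sub>m q * transpose_mat A * \<Phi>) *\<^sub>v g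
     = V *\<^sub>v vec n (\<lambda>j. \<sigma> j ^ (2*q+1) * (transpose_mat U *\<^sub>v (\<Phi> *\<^sub>v g)) $ j)"
proof -
  have AtA: "transpose_mat A * A \<in> carrier_mat n n" using A_carrier by simp
  have At: "transpose_mat A \<in> carrier_mat n m" using A_carrier by simp
  have y: "\<Phi> *\<^sub>v g \<in> carrier_vec m" using Phi g by simp
  define u where "u = transpose_mat U *\<^sub>v (\<Phi> *\<^sub>v g)"
  define a where "a = vec n (\<lambda>j. \<sigma> j * u $ j)"
  have a: "a \<in> carrier_vec n" by (simp add: a_def)
  have "((transpose_mat A * A) ^\<^sub>m q * transpose_mat A * \<Phi>) *\<^sub>v g
      = (transpose_mat A * A) ^\<^sub>m q *\<^sub>v (transpose_mat A *\<^sub>v (\<Phi> *\<^sub>v g))"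
    using assoc_mult_mat_vec[OF mult_carrier_mat[OF pow_carrier_mat[OF AtA] At] Phi g]
      assoc_mult_mat_vec[OF pow_carrier_mat[OF AtA] At y] by simp
  also have "transpose_mat A *\<^sub>v (\<Phi> *\<^sub>v g) = V *\<^sub>v a" using transpose_A_mult_vec[OF y] by (simp add: a_def u_def)
  also have "(transpose_mat A * A) ^\<^sub>m q *\<^sub>v (V *\<^sub>v a) = V *\<^sub>v vec n (\<lambda>j. \<sigma> j ^ (2*q) * (transpose_mat V *\<^sub>v (V *\<^sub>v a)) $ j)"
    using gram_power_mult_vec[of "V *\<^sub>v a"] V a by simp
  also have "transpose_mat V *\<^sub>v (V *\<^sub>v a) = a" using orthonormal_cancel[OF V a] .
  also have "vec n (\<lambda>j. \<sigma> j ^ (2*q) * a $ j) = vec n (\<lambda>j. \<sigma> j ^ (2*q+1) * u $ j)"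
    unfolding a_def by (intro eq_vecI) auto
  finally show ?thesis by (simp add: u_def)
qed

lemma A_sketch_mult_vec:
  assumes Phi: "\<Phi> \<in> carrier_mat m d" and g: "g \<in> carrier_vec d"
  shows "A *\<^sub>v (((transpose_mat A * A) ^\<^sub>m q * transpose_mat A * \<Phi>) *\<^sub>v g)
     = U *\<^sub>v vec m (\<lambda>j. (if j < n then \<sigma> j ^ (2*q+2) else 0) * (transpose_mat U *\<^sub>v (\<Phi> *\<^sub>v g)) $ j)"
proof -
  define b where "b = vec n (\<lambda>j. \<sigma> j ^ (2*q+1) * (transpose_mat U *\<^sub>v (\<Phi> *\<^sub>v g)) $ j)"
  have b: "b \<in> carrier_vec n" by (simp add: b_def)
  have "A *\<^sub>v (((transpose_mat A * A) ^\<^sub>m q * transpose_mat A * \<Phi>) *\<^sub>v g) = A *\<^sub>v (V *\<^sub>v b)"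
    using sketch_mult_vec[OF Phi g] by (simp add: b_def)
  also have "\<dots> = U *\<^sub>v vec m (\<lambda>j. if j < n then \<sigma> j * (transpose_mat V *\<^sub>v (V *\<^sub>v b)) $ j else 0)"
    using A_mult_vec[of "V *\<^sub>v b"] V b by simp
  also have "transpose_mat V *\<^sub>v (V *\<^sub>v b) = b" using orthonormal_cancel[OF V b] .
  also have "vec m (\<lambda>j. if j < n then \<sigma> j * b $ j else 0)
     = vec m (\<lambda>j. (if j < n then \<sigma> j ^ (2*q+2) else 0) * (transpose_mat U *\<^sub>v (\<Phi> *\<^sub>v g)) $ j)"
    unfolding b_def by (intro eq_vecI) auto
  finally show ?thesis .
qed

end
lemma first_cols_carrier: "U \<in> carrier_mat m m' \<Longrightarrow> first_cols U k \<in> carrier_mat m k"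
  by (simp add: first_cols_def)

lemma last_cols_carrier: "U \<in> carrier_mat m m' \<Longrightarrow> last_cols U k \<in> carrier_mat m (m' - k)"
  by (simp add: last_cols_def)

lemma col_first_cols: "U \<in> carrier_mat m m' \<Longrightarrow> j < k \<Longrightarrow> k \<le> m' \<Longrightarrow> col (first_cols U k) j = col U j"
  by (intro eq_vecI) (auto simp: first_cols_def)

lemma col_last_cols: "U \<in> carrier_mat m m' \<Longrightarrow> j < m' - k \<Longrightarrow> col (last_cols U k) j = col U (j + k)"
  by (intro eq_vecI) (auto simp: last_cols_def)

lemma first_cols_mult_vec:
  assumes W: "W \<in> carrier_mat N N" and kN: "k \<le> N" and x: "x \<in> carrier_vec k"
  shows "first_cols W k *\<^sub>v x = W *\<^sub>v vec N (\<lambda>j. if j < k then x $ j else 0)"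
proof (rule eq_vecI)
  fix r assume "r < dim_vec (W *\<^sub>v vec N (\<lambda>j. if j < k then x $ j else 0))"
  then have r: "r < N" using W by simp
  have "(W *\<^sub>v vec N (\<lambda>j. if j < k then x $ j else 0)) $ r = (\<Sum>l=0..<N. W $$ (r,l) * (if l < k then x $ l else 0))"
    using W r by (simp add: scalar_prod_def)
  also have "\<dots> = (\<Sum>l=0..<N. if l < k then W $$ (r,l) * x $ l else 0)" by (rule sum.cong) auto
  also have "\<dots> = (\<Sum>l=0..<k. W $$ (r,l) * x $ l)" using kN by (rule sum_if_less)
  also have "\<dots> = (first_cols W k *\<^sub>v x) $ r"
    using W r x by (simp add: first_cols_def scalar_prod_def)
  finally show "(first_cols W k *\<^sub>v x) $ r = (W *\<^sub>v vec N (\<lambda>j. if j < k then x $ j else 0)) $ r" by simp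
qed (use W in \<open>simp add: first_cols_def\<close>)

lemma first_cols_orthonormal:
  assumes U: "U \<in> carrier_mat m m" and UU: "transpose_mat U * U = 1\<^sub>m m" and km: "k \<le> m"
  shows "transpose_mat (first_cols U k) * first_cols U k = (1\<^sub>m k :: real mat)"
proof (rule eq_matI)
  fix a b assume "a < dim_row (1\<^sub>m k :: real mat)" "b < dim_col (1\<^sub>m k :: real mat)"
  then have a: "a < k" and b: "b < k" by auto
  have "(transpose_mat (first_cols U k) * first_cols U k) $$ (a, b) = col (first_cols U k) a \<bullet> col (first_cols U k) b"
    using a b by (simp add: first_cols_def)
  also have "\<dots> = col U a \<bullet> col U b" using col_first_cols[OF U a km] col_first_cols[OF U b km] by simp
  also have "\<dots> = (transpose_mat U * U) $$ (a, b)" using U a b km by simp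
  also have "\<dots> = (1\<^sub>m k :: real mat) $$ (a, b)" using UU a b km by simp
  finally show "(transpose_mat (first_cols U k) * first_cols U k) $$ (a, b) = (1\<^sub>m k :: real mat) $$ (a, b)" .
qed (auto simp: first_cols_def)

lemma transpose_first_cols_mult_vec_nth:
  assumes "U \<in> carrier_mat m m'" and "j < k" and "k \<le> m'" and "y \<in> carrier_vec m"
  shows "(transpose_mat (first_cols U k) *\<^sub>v y) $ j = (transpose_mat U *\<^sub>v y) $ j"
  using assms col_first_cols[OF assms(1-3)] by (simp add: first_cols_def)

lemma transpose_last_cols_mult_vec_nth:
  assumes "U \<in> carrier_mat m m'" and "j < m' - k" and "y \<in> carrier_vec m"
  shows "(transpose_mat (last_cols U k) *\<^sub>v y) $ j = (transpose_mat U *\<^sub>v y) $ (j + k)"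
  using assms col_last_cols[OF assms(1,2)] by (simp add: last_cols_def)

lemma tail_sq_le:
  fixes U :: "real mat" and e :: "nat \<Rightarrow> real"
  assumes U: "U \<in> carrier_mat m m" and y: "y \<in> carrier_vec m" and kN: "k \<le> N" and Nm: "N \<le> m"
    and e_tail: "\<forall>j. k \<le> j \<longrightarrow> j < N \<longrightarrow> \<bar>e j\<bar> \<le> b"
  shows "vec N (\<lambda>j. if j < k then 0 else e j * (transpose_mat U *\<^sub>v y) $ j)
           \<bullet> vec N (\<lambda>j. if j < k then 0 else e j * (transpose_mat U *\<^sub>v y) $ j)
         \<le> b\<^sup>2 * ((transpose_mat (last_cols U k) *\<^sub>v y) \<bullet> (transpose_mat (last_cols U k) *\<^sub>v y))"
proof -
  define u where "u = transpose_mat U *\<^sub>v y"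
  define z where "z = transpose_mat (last_cols U k) *\<^sub>v y"
  have z: "z \<in> carrier_vec (m - k)" using last_cols_carrier[OF U, of k] y by (simp add: z_def)
  have "vec N (\<lambda>j. if j < k then 0 else e j * u $ j) \<bullet> vec N (\<lambda>j. if j < k then 0 else e j * u $ j)
      = (\<Sum>j=0..<N. (if j < k then 0 else e j * u $ j)\<^sup>2)"
    by (simp add: scalar_prod_def power2_eq_square)
  also have "\<dots> = (\<Sum>j=k..<N. (e j * u $ j)\<^sup>2)"
    by (rule sum.mono_neutral_cong_right) auto
  also have "\<dots> \<le> (\<Sum>j=k..<N. b\<^sup>2 * (u $ j)\<^sup>2)"
  proof (rule sum_mono)
    fix j assume "j \<in> {k..<N}"
    then have "(e j)\<^sup>2 \<le> b\<^sup>2" using e_tail by (metis abs_ge_zero atLeastLessThan_iff order_trans power2_abs power_mono)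
    then show "(e j * u $ j)\<^sup>2 \<le> b\<^sup>2 * (u $ j)\<^sup>2"
      by (simp add: power_mult_distrib mult_right_mono)
  qed
  also have "\<dots> \<le> b\<^sup>2 * (\<Sum>j=k..<m. (u $ j)\<^sup>2)"
    using Nm by (simp add: sum_distrib_left[symmetric] mult_left_mono sum_mono2)
  also have "(\<Sum>j=k..<m. (u $ j)\<^sup>2) = (\<Sum>j=0..<m-k. (u $ (j + k))\<^sup>2)"
    using sum.shift_bounds_nat_ivl[of "\<lambda>j. (u $ j)\<^sup>2" 0 k "m-k"] kN Nm by simp
  also have "\<dots> = z \<bullet> z"
  proof -
    have "z $ j = u $ (j + k)" if "j < m - k" for j
      using transpose_last_cols_mult_vec_nth[OF U that y] by (simp add: z_def u_def)
    then show ?thesis using z by (simp add: scalar_prod_def power2_eq_square)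
  qed
  finally show ?thesis unfolding u_def z_def .
qed

lemma inverse_scaled_sq_le:
  fixes \<sigma> :: "nat \<Rightarrow> real"
  assumes x: "x \<in> carrier_vec k" and xz: "\<forall>j. i < j \<longrightarrow> j < k \<longrightarrow> x $ j = 0"
    and sig_i: "\<sigma> i > 0" and sig_mono: "\<forall>j\<le>i. \<sigma> i \<le> \<sigma> j"
  shows "vec k (\<lambda>j. x $ j / \<sigma> j ^ p) \<bullet> vec k (\<lambda>j. x $ j / \<sigma> j ^ p) \<le> (x \<bullet> x) / (\<sigma> i ^ p)\<^sup>2"
proof -
  have "vec k (\<lambda>j. x $ j / \<sigma> j ^ p) \<bullet> vec k (\<lambda>j. x $ j / \<sigma> j ^ p) = (\<Sum>j=0..<k. (x $ j / \<sigma> j ^ p)\<^sup>2)"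
    by (simp add: scalar_prod_def power2_eq_square)
  also have "\<dots> \<le> (\<Sum>j=0..<k. (x $ j)\<^sup>2 / (\<sigma> i ^ p)\<^sup>2)"
  proof (rule sum_mono)
    fix j assume j: "j \<in> {0..<k}"
    show "(x $ j / \<sigma> j ^ p)\<^sup>2 \<le> (x $ j)\<^sup>2 / (\<sigma> i ^ p)\<^sup>2"
    proof (cases "j \<le> i")
      case True
      have sp: "0 < \<sigma> i ^ p" using sig_i by simp
      have le: "\<sigma> i ^ p \<le> \<sigma> j ^ p" using sig_mono True sig_i by (intro power_mono) auto
      then have sq: "0 < \<sigma> j ^ p" using sp by linarith
      have "(\<sigma> i ^ p)\<^sup>2 \<le> (\<sigma> j ^ p)\<^sup>2" using power_mono[OF le, of 2] sp by simp
      moreover have "0 < (\<sigma> j ^ p)\<^sup>2 * (\<sigma> i ^ p)\<^sup>2"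
        using mult_pos_pos[OF mult_pos_pos[OF sq sq] mult_pos_pos[OF sp sp]]
        by (simp only: power2_eq_square)
      ultimately have "(x $ j)\<^sup>2 / (\<sigma> j ^ p)\<^sup>2 \<le> (x $ j)\<^sup>2 / (\<sigma> i ^ p)\<^sup>2"
        by (intro divide_left_mono) auto
      then show ?thesis by (simp add: power_divide)
    qed (use xz j in simp)
  qed
  also have "\<dots> = (x \<bullet> x) / (\<sigma> i ^ p)\<^sup>2"
    using x by (simp add: scalar_prod_def power2_eq_square sum_divide_distrib)
  finally show ?thesis .
qed

lemma sketch_image_decomposition:
  fixes W U \<Phi> G :: "real mat" and e \<sigma> :: "nat \<Rightarrow> real" and x :: "real vec"
  assumes W: "W \<in> carrier_mat N N" "transpose_mat W * W = 1\<^sub>m N"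
    and U: "U \<in> carrier_mat m m" and Phi: "\<Phi> \<in> carrier_mat m d"
    and kN: "k \<le> N" and Nm: "N \<le> m"
    and G: "G \<in> carrier_mat d k" and FG: "transpose_mat (first_cols U k) * \<Phi> * G = 1\<^sub>m k"
    and e_head: "\<forall>j<k. e j = \<sigma> j ^ p"
    and e_tail: "\<forall>j. k \<le> j \<longrightarrow> j < N \<longrightarrow> \<bar>e j\<bar> \<le> \<sigma> k ^ p"
    and sig_pos: "\<forall>j<k. \<sigma> j > 0" and ik: "i < k" and sig_mono: "\<forall>j\<le>i. \<sigma> i \<le> \<sigma> j"
    and x: "x \<in> carrier_vec k" and xz: "\<forall>j. i < j \<longrightarrow> j < k \<longrightarrow> x $ j = 0"
  shows "\<exists>w \<in> carrier_vec N.
     W *\<^sub>v vec N (\<lambda>j. e j * (transpose_mat U *\<^sub>v (\<Phi> *\<^sub>v (G *\<^sub>v vec k (\<lambda>j. x $ j / \<sigma> j ^ p)))) $ j)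
       = first_cols W k *\<^sub>v x + w \<and>
     (first_cols W k *\<^sub>v x) \<bullet> w = 0 \<and>
     w \<bullet> w \<le> ((\<sigma> k / \<sigma> i) ^ p * spec_norm (transpose_mat (last_cols U k) * \<Phi> * G))\<^sup>2 * (x \<bullet> x)"
proof -
  define s where "s = vec k (\<lambda>j. x $ j / \<sigma> j ^ p)"
  have s: "s \<in> carrier_vec k" by (simp add: s_def)
  have Gs: "G *\<^sub>v s \<in> carrier_vec d" using G s by simp
  define y where "y = \<Phi> *\<^sub>v (G *\<^sub>v s)"
  have y: "y \<in> carrier_vec m" using Phi Gs by (simp add: y_def)
  define u where "u = transpose_mat U *\<^sub>v y"
  have Ukt: "transpose_mat (first_cols U k) \<in> carrier_mat k m" using first_cols_carrier[OF U] by simp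
  have Ult: "transpose_mat (last_cols U k) \<in> carrier_mat (m - k) m" using last_cols_carrier[OF U] by simp
  define F2 where "F2 = transpose_mat (last_cols U k) * \<Phi>"
  have F2: "F2 \<in> carrier_mat (m - k) d" using Ult Phi by (simp add: F2_def)
  have F2y: "transpose_mat (last_cols U k) *\<^sub>v y = (F2 * G) *\<^sub>v s"
    using assoc_mult_mat_vec[OF Ult Phi Gs] assoc_mult_mat_vec[OF F2 G s] by (simp add: y_def F2_def)
  have "transpose_mat (first_cols U k) *\<^sub>v y = (transpose_mat (first_cols U k) * \<Phi> * G) *\<^sub>v s"
    using assoc_mult_mat_vec[OF Ukt Phi Gs] assoc_mult_mat_vec[OF mult_carrier_mat[OF Ukt Phi] G s]
    by (simp add: y_def)
  then have "transpose_mat (first_cols U k) *\<^sub>v y = s" using FG s by simp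
  then have head: "u $ j = s $ j" if "j < k" for j
    using transpose_first_cols_mult_vec_nth[OF U that _ y] that kN Nm by (simp add: u_def)
  define xh where "xh = vec N (\<lambda>j. if j < k then x $ j else 0)"
  define wh where "wh = vec N (\<lambda>j. if j < k then 0 else e j * u $ j)"
  have xh: "xh \<in> carrier_vec N" and wh: "wh \<in> carrier_vec N" by (simp_all add: xh_def wh_def)
  have "vec N (\<lambda>j. e j * u $ j) = xh + wh"
    using e_head sig_pos head by (intro eq_vecI) (auto simp: xh_def wh_def s_def)
  then have split: "W *\<^sub>v vec N (\<lambda>j. e j * u $ j) = first_cols W k *\<^sub>v x + W *\<^sub>v wh"
    using first_cols_mult_vec[OF W(1) kN x] mult_add_distrib_mat_vec[OF W(1) xh wh]
    by (simp add: xh_def)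
  have orth: "(first_cols W k *\<^sub>v x) \<bullet> (W *\<^sub>v wh) = 0"
    using first_cols_mult_vec[OF W(1) kN x] orthonormal_scalar_prod[OF W xh wh]
    by (simp add: xh_def wh_def scalar_prod_def)
  define c where "c = spec_norm (F2 * G)"
  have "(W *\<^sub>v wh) \<bullet> (W *\<^sub>v wh) = wh \<bullet> wh" using orthonormal_scalar_prod[OF W wh wh] .
  also have "\<dots> \<le> (\<sigma> k ^ p)\<^sup>2 * (((F2 * G) *\<^sub>v s) \<bullet> ((F2 * G) *\<^sub>v s))"
    using tail_sq_le[OF U y kN Nm e_tail] by (simp only: wh_def u_def F2y)
  also have "\<dots> \<le> (\<sigma> k ^ p)\<^sup>2 * (c\<^sup>2 * (s \<bullet> s))"
    using spec_norm_mult_vec_sq_le[OF mult_carrier_mat[OF F2 G] s]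
    by (intro mult_left_mono) (auto simp: c_def)
  also have "\<dots> \<le> (\<sigma> k ^ p)\<^sup>2 * (c\<^sup>2 * ((x \<bullet> x) / (\<sigma> i ^ p)\<^sup>2))"
    using inverse_scaled_sq_le[OF x xz _ sig_mono] sig_pos ik
    by (intro mult_left_mono) (auto simp: s_def)
  also have "\<dots> = ((\<sigma> k / \<sigma> i) ^ p * c)\<^sup>2 * (x \<bullet> x)"
    by (simp add: power_divide power_mult_distrib)
  finally show ?thesis
    using split orth mult_mat_vec_carrier[OF W(1) wh]
    unfolding c_def F2_def u_def y_def s_def by blast
qed

lemma principal_angle_bound_of_sketch_range:
  fixes W X U \<Phi> G :: "real mat" and e \<sigma> \<alpha> :: "nat \<Rightarrow> real"
  assumes W: "W \<in> carrier_mat N N" "transpose_mat W * W = 1\<^sub>m N"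
    and X: "X \<in> carrier_mat N r" "transpose_mat X * X = 1\<^sub>m r"
    and pa: "principal_angles X (first_cols W k) \<alpha>"
    and U: "U \<in> carrier_mat m m" and Phi: "\<Phi> \<in> carrier_mat m d"
    and kN: "k \<le> N" and Nm: "N \<le> m"
    and G: "G \<in> carrier_mat d k" and FG: "transpose_mat (first_cols U k) * \<Phi> * G = 1\<^sub>m k"
    and e_head: "\<forall>j<k. e j = \<sigma> j ^ p"
    and e_tail: "\<forall>j. k \<le> j \<longrightarrow> j < N \<longrightarrow> \<bar>e j\<bar> \<le> \<sigma> k ^ p"
    and sig_pos: "\<forall>j<k. \<sigma> j > 0" and ik: "i < k" and sig_mono: "\<forall>j\<le>i. \<sigma> i \<le> \<sigma> j"
    and sig_k: "0 \<le> \<sigma> k"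
    and range: "\<And>g. g \<in> carrier_vec d \<Longrightarrow>
      W *\<^sub>v vec N (\<lambda>j. e j * (transpose_mat U *\<^sub>v (\<Phi> *\<^sub>v g)) $ j) \<in> col_range X"
  shows "cos (\<alpha> i) \<ge> 1 / sqrt (1 + ((\<sigma> k / \<sigma> i) ^ p * spec_norm (transpose_mat (last_cols U k) * \<Phi> * G))\<^sup>2)
    \<and> tan (\<alpha> i) \<le> (\<sigma> k / \<sigma> i) ^ p * spec_norm (transpose_mat (last_cols U k) * \<Phi> * G)"
proof -
  define t where "t = (\<sigma> k / \<sigma> i) ^ p * spec_norm (transpose_mat (last_cols U k) * \<Phi> * G)"
  have Wk: "first_cols W k \<in> carrier_mat N k" using first_cols_carrier[OF W(1)] .
  have "transpose_mat (last_cols U k) * \<Phi> * G \<in> carrier_mat (m - k) k"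
    using last_cols_carrier[OF U, of k] Phi G by simp
  then have "0 \<le> spec_norm (transpose_mat (last_cols U k) * \<Phi> * G)"
    using ik by (intro spec_norm_nonneg) auto
  moreover have "0 \<le> (\<sigma> k / \<sigma> i) ^ p" using sig_k sig_pos ik by (intro zero_le_power divide_nonneg_pos) auto
  ultimately have "0 \<le> t" unfolding t_def by simp
  moreover have "(sin (\<alpha> i))\<^sup>2 \<le> t\<^sup>2 / (1 + t\<^sup>2)"
  proof (rule principal_angle_sin_sq_le[OF X Wk first_cols_orthonormal[OF W kN] pa ik])
    fix x :: "real vec"
    assume x: "x \<in> carrier_vec k" and xz: "\<forall>j. i < j \<longrightarrow> j < k \<longrightarrow> x $ j = 0"
    define g where "g = G *\<^sub>v vec k (\<lambda>j. x $ j / \<sigma> j ^ p)"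
    obtain w where "w \<in> carrier_vec N"
      and "W *\<^sub>v vec N (\<lambda>j. e j * (transpose_mat U *\<^sub>v (\<Phi> *\<^sub>v g)) $ j) = first_cols W k *\<^sub>v x + w"
      and "(first_cols W k *\<^sub>v x) \<bullet> w = 0" and "w \<bullet> w \<le> t\<^sup>2 * (x \<bullet> x)"
      using sketch_image_decomposition[OF W U Phi kN Nm G FG e_head e_tail sig_pos ik sig_mono x xz]
      unfolding g_def t_def by blast
    moreover obtain h where "h \<in> carrier_vec r"
      and "X *\<^sub>v h = W *\<^sub>v vec N (\<lambda>j. e j * (transpose_mat U *\<^sub>v (\<Phi> *\<^sub>v g)) $ j)"
      using range[of g] G X(1) unfolding col_range_def g_def by auto
    ultimately show "\<exists>h w. h \<in> carrier_vec r \<and> w \<in> carrier_vec N \<and>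
        X *\<^sub>v h = first_cols W k *\<^sub>v x + w \<and> (first_cols W k *\<^sub>v x) \<bullet> w = 0 \<and> w \<bullet> w \<le> t\<^sup>2 * (x \<bullet> x)"
      by metis
  qed
  moreover have "0 \<le> \<alpha> i" "\<alpha> i \<le> pi / 2" using pa ik Wk unfolding principal_angles_def by auto
  ultimately show ?thesis using cos_tan_bound_of_sin_sq_le unfolding t_def by blast
qed

lemma mult_vec_in_col_range: "M \<in> carrier_mat a b \<Longrightarrow> g \<in> carrier_vec b \<Longrightarrow> M *\<^sub>v g \<in> col_range M"
  unfolding col_range_def by auto

lemma col_range_mult_subset:
  assumes "X \<in> carrier_mat a b" and "R \<in> carrier_mat b c"
  shows "col_range (X * R) \<subseteq> col_range X"
proof
  fix v assume "v \<in> col_range (X * R)"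
  then obtain h where "h \<in> carrier_vec c" and "v = (X * R) *\<^sub>v h"
    using assms unfolding col_range_def by auto
  then have "v = X *\<^sub>v (R *\<^sub>v h)" and "R *\<^sub>v h \<in> carrier_vec b"
    using assoc_mult_mat_vec[OF assms] assms(2) by auto
  then show "v \<in> col_range X" using assms unfolding col_range_def by auto
qed

lemma col_range_mult_mono:
  assumes M: "M \<in> carrier_mat a b" and B: "B \<in> carrier_mat b c" and C: "C \<in> carrier_mat b c'"
    and BC: "col_range B \<subseteq> col_range C"
  shows "col_range (M * B) \<subseteq> col_range (M * C)"
proof
  fix v assume "v \<in> col_range (M * B)"
  then obtain h where h: "h \<in> carrier_vec c" and v: "v = M *\<^sub>v (B *\<^sub>v h)"
    using M B assoc_mult_mat_vec[OF M B] unfolding col_range_def by auto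
  have "B *\<^sub>v h \<in> col_range C" using BC h B unfolding col_range_def by auto
  then obtain h' where h': "h' \<in> carrier_vec c'" and "B *\<^sub>v h = C *\<^sub>v h'"
    using C unfolding col_range_def by auto
  then have "v = (M * C) *\<^sub>v h'" using assoc_mult_mat_vec[OF M C h'] v by simp
  moreover have "dim_col (M * C) = c'" using C by simp
  ultimately show "v \<in> col_range (M * C)" using h' unfolding col_range_def by blast
qed

lemma col_range_mult_orthogonal:
  assumes X: "X \<in> carrier_mat a b" and T: "T \<in> carrier_mat b b" "transpose_mat T * T = 1\<^sub>m b"
  shows "col_range X \<subseteq> col_range (X * (T :: real mat))"
proof
  fix v assume "v \<in> col_range X"
  then obtain h where h: "h \<in> carrier_vec b" and v: "v = X *\<^sub>v h"
    using X unfolding col_range_def by auto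
  have "h = T *\<^sub>v (transpose_mat T *\<^sub>v h)"
    using orthonormal_cancel[of "transpose_mat T" b b h] orthogonal_right_inverse[OF T] T(1) h by simp
  moreover have Th: "transpose_mat T *\<^sub>v h \<in> carrier_vec b" using T(1) h by simp
  ultimately have "v = (X * T) *\<^sub>v (transpose_mat T *\<^sub>v h)"
    using assoc_mult_mat_vec[OF X T(1) Th] v by simp
  moreover have "dim_col (X * T) = b" using T(1) by simp
  ultimately show "v \<in> col_range (X * T)" using Th unfolding col_range_def by blast
qed

lemma orthonormal_mult:
  assumes X: "X \<in> carrier_mat a b" "transpose_mat X * X = 1\<^sub>m b"
    and T: "T \<in> carrier_mat b c" "transpose_mat T * T = 1\<^sub>m c"
  shows "transpose_mat (X * T) * (X * T) = (1\<^sub>m c :: real mat)"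
proof -
  have Tt: "transpose_mat T \<in> carrier_mat c b" and Xt: "transpose_mat X \<in> carrier_mat b a"
    using X(1) T(1) by auto
  have "transpose_mat (X * T) * (X * T) = transpose_mat T * transpose_mat X * (X * T)"
    using transpose_mult[OF X(1) T(1)] by simp
  also have "\<dots> = transpose_mat T * ((transpose_mat X * X) * T)"
    using assoc_mult_mat[OF Tt Xt mult_carrier_mat[OF X(1) T(1)]] assoc_mult_mat[OF Xt X(1) T(1)] by simp
  finally show ?thesis using X T by simp
qed

lemma power_mult_sq: "(a ^ j * c)\<^sup>2 = a ^ (2 * j) * (c :: real)\<^sup>2"
  by (simp add: power_mult_distrib power_mult mult.commute)

context svd_setting
begin

lemma head_singular_values_pos:
  assumes "\<sigma> (k - 1) > 0" and "k \<le> n"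
  shows "\<forall>j<k. \<sigma> j > 0"
proof (intro allI impI)
  fix j assume "j < k"
  then have "j \<le> k - 1" and "k - 1 < n" using assms(2) by auto
  then have "\<sigma> (k - 1) \<le> \<sigma> j" using sig_ord by blast
  then show "\<sigma> j > 0" using assms(1) by simp
qed

lemma sketch_carrier:
  assumes "\<Phi> \<in> carrier_mat m d"
  shows "(transpose_mat A * A) ^\<^sub>m q * transpose_mat A * \<Phi> \<in> carrier_mat n d"
proof -
  have "transpose_mat A * A \<in> carrier_mat n n" and At: "transpose_mat A \<in> carrier_mat n m"
    using A_carrier by auto
  then show ?thesis using mult_carrier_mat[OF mult_carrier_mat[OF pow_carrier_mat At] assms] by blast
qed

lemma left_principal_angle_bound:
  fixes \<Phi> X :: "real mat" and \<alpha> :: "nat \<Rightarrow> real"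
  assumes Phi: "\<Phi> \<in> carrier_mat m d"
    and rank: "vec_space.rank k (transpose_mat (first_cols U k) * \<Phi>) = k"
    and kn: "k < n" and ik: "i < k" and sig_k: "\<sigma> (k - 1) > 0"
    and X: "X \<in> carrier_mat m r" "transpose_mat X * X = 1\<^sub>m r"
    and range: "col_range (A * ((transpose_mat A * A) ^\<^sub>m q * transpose_mat A * \<Phi>)) \<subseteq> col_range X"
    and pa: "principal_angles X (first_cols U k) \<alpha>"
  shows "cos (\<alpha> i) \<ge> 1 / sqrt (1 + (\<sigma> k / \<sigma> i) ^ (4*q+4) *
      (spec_norm (transpose_mat (last_cols U k) * \<Phi> * pinv (transpose_mat (first_cols U k) * \<Phi>)))\<^sup>2)
    \<and> tan (\<alpha> i) \<le> (\<sigma> k / \<sigma> i) ^ (2*q+2) *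
      spec_norm (transpose_mat (last_cols U k) * \<Phi> * pinv (transpose_mat (first_cols U k) * \<Phi>))"
proof -
  define B where "B = (transpose_mat A * A) ^\<^sub>m q * transpose_mat A * \<Phi>"
  have B: "B \<in> carrier_mat n d" using sketch_carrier[OF Phi] by (simp add: B_def)
  define e where "e = (\<lambda>j. if j < n then \<sigma> j ^ (2*q+2) else 0)"
  have e_tail: "\<forall>j. k \<le> j \<longrightarrow> j < m \<longrightarrow> \<bar>e j\<bar> \<le> \<sigma> k ^ (2*q+2)"
  proof (intro allI impI)
    fix j assume j: "k \<le> j" "j < m"
    show "\<bar>e j\<bar> \<le> \<sigma> k ^ (2*q+2)"
    proof (cases "j < n")
      case True
      then have "0 \<le> \<sigma> j" "\<sigma> j \<le> \<sigma> k" using sig_ord sig_nn j by auto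
      then show ?thesis using True power_mono[of "\<sigma> j" "\<sigma> k" "2*q+2"] by (simp add: e_def)
    qed (use sig_nn kn in \<open>simp add: e_def\<close>)
  qed
  have range': "U *\<^sub>v vec m (\<lambda>j. e j * (transpose_mat U *\<^sub>v (\<Phi> *\<^sub>v g)) $ j) \<in> col_range X"
    if g: "g \<in> carrier_vec d" for g
  proof -
    have "U *\<^sub>v vec m (\<lambda>j. e j * (transpose_mat U *\<^sub>v (\<Phi> *\<^sub>v g)) $ j) = (A * B) *\<^sub>v g"
      using A_sketch_mult_vec[OF Phi g] assoc_mult_mat_vec[OF A_carrier B g] by (simp add: e_def B_def)
    moreover have "(A * B) *\<^sub>v g \<in> col_range (A * B)"
      using mult_vec_in_col_range[OF mult_carrier_mat[OF A_carrier B] g] .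
    ultimately show ?thesis using range by (auto simp: B_def)
  qed
  have F1: "transpose_mat (first_cols U k) * \<Phi> \<in> carrier_mat k d"
    using first_cols_carrier[OF U(1), of k] Phi by simp
  have e_head: "\<forall>j<k. e j = \<sigma> j ^ (2*q+2)" using kn by (simp add: e_def)
  have "k \<le> m" "\<forall>j\<le>i. \<sigma> i \<le> \<sigma> j" "0 \<le> \<sigma> k" using kn nm ik sig_ord sig_nn by auto
  from principal_angle_bound_of_sketch_range[OF U X pa U(1) Phi this(1) order.refl
      conjunct1[OF pinv_right_inverse[OF F1 rank]] conjunct2[OF pinv_right_inverse[OF F1 rank]]
      e_head e_tail head_singular_values_pos[OF sig_k less_imp_le[OF kn]] ik this(2,3) range']
  moreover have "4*q+4 = 2*(2*q+2)" by simp
  ultimately show ?thesis by (simp only: power_mult_sq[symmetric])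
qed

lemma right_principal_angle_bound:
  fixes \<Phi> X :: "real mat" and \<alpha> :: "nat \<Rightarrow> real"
  assumes Phi: "\<Phi> \<in> carrier_mat m d"
    and rank: "vec_space.rank k (transpose_mat (first_cols U k) * \<Phi>) = k"
    and kn: "k < n" and ik: "i < k" and sig_k: "\<sigma> (k - 1) > 0"
    and X: "X \<in> carrier_mat n r" "transpose_mat X * X = 1\<^sub>m r"
    and range: "col_range ((transpose_mat A * A) ^\<^sub>m q * transpose_mat A * \<Phi>) \<subseteq> col_range X"
    and pa: "principal_angles X (first_cols V k) \<alpha>"
  shows "cos (\<alpha> i) \<ge> 1 / sqrt (1 + (\<sigma> k / \<sigma> i) ^ (4*q+2) *
      (spec_norm (transpose_mat (last_cols U k) * \<Phi> * pinv (transpose_mat (first_cols U k) * \<Phi>)))\<^sup>2)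
    \<and> tan (\<alpha> i) \<le> (\<sigma> k / \<sigma> i) ^ (2*q+1) *
      spec_norm (transpose_mat (last_cols U k) * \<Phi> * pinv (transpose_mat (first_cols U k) * \<Phi>))"
proof -
  define B where "B = (transpose_mat A * A) ^\<^sub>m q * transpose_mat A * \<Phi>"
  have B: "B \<in> carrier_mat n d" using sketch_carrier[OF Phi] by (simp add: B_def)
  have e_tail: "\<forall>j. k \<le> j \<longrightarrow> j < n \<longrightarrow> \<bar>\<sigma> j ^ (2*q+1)\<bar> \<le> \<sigma> k ^ (2*q+1)"
  proof (intro allI impI)
    fix j assume j: "k \<le> j" "j < n"
    then have "0 \<le> \<sigma> j" "\<sigma> j \<le> \<sigma> k" using sig_ord sig_nn by auto
    then show "\<bar>\<sigma> j ^ (2*q+1)\<bar> \<le> \<sigma> k ^ (2*q+1)" using power_mono[of "\<sigma> j" "\<sigma> k" "2*q+1"] by simp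
  qed
  have range': "V *\<^sub>v vec n (\<lambda>j. \<sigma> j ^ (2*q+1) * (transpose_mat U *\<^sub>v (\<Phi> *\<^sub>v g)) $ j) \<in> col_range X"
    if g: "g \<in> carrier_vec d" for g
    using sketch_mult_vec[OF Phi g] mult_vec_in_col_range[OF B g] range by (auto simp: B_def)
  have F1: "transpose_mat (first_cols U k) * \<Phi> \<in> carrier_mat k d"
    using first_cols_carrier[OF U(1), of k] Phi by simp
  have "k \<le> n" "\<forall>j\<le>i. \<sigma> i \<le> \<sigma> j" "0 \<le> \<sigma> k" using kn ik sig_ord sig_nn by auto
  from principal_angle_bound_of_sketch_range[OF V X pa U(1) Phi this(1) nm
      conjunct1[OF pinv_right_inverse[OF F1 rank]] conjunct2[OF pinv_right_inverse[OF F1 rank]]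
      _ e_tail head_singular_values_pos[OF sig_k this(1)] ik this(2,3) range']
  have "cos (\<alpha> i) \<ge> 1 / sqrt (1 + ((\<sigma> k / \<sigma> i) ^ (2*q+1) *
      spec_norm (transpose_mat (last_cols U k) * \<Phi> * pinv (transpose_mat (first_cols U k) * \<Phi>)))\<^sup>2)
    \<and> tan (\<alpha> i) \<le> (\<sigma> k / \<sigma> i) ^ (2*q+1) *
      spec_norm (transpose_mat (last_cols U k) * \<Phi> * pinv (transpose_mat (first_cols U k) * \<Phi>))"
    by simp
  moreover have "4*q+2 = 2*(2*q+1)" by simp
  ultimately show ?thesis by (simp only: power_mult_sq[symmetric])
qed

end

theorem corollary2:
  fixes m n k p d q :: nat
    and A U \<Sigma> V \<Phi> Pbar Q R Ptil Rtil P L :: "real mat"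
    and \<sigma> \<theta> \<phi> :: "nat \<Rightarrow> real"
  assumes "m \<ge> n" and "k \<ge> 1" and "p \<ge> 1" and "d = k + p" and "d < n"
    and A: "A \<in> carrier_mat m n"
    and U: "U \<in> carrier_mat m m" "transpose_mat U * U = 1\<^sub>m m"
    and V: "V \<in> carrier_mat n n" "transpose_mat V * V = 1\<^sub>m n"
    and Sig: "\<Sigma> \<in> carrier_mat m n"
      "\<forall>i<m. \<forall>j<n. \<Sigma> $$ (i,j) = (if i = j then \<sigma> i else 0)"
    and sig_ord: "\<forall>i j. i \<le> j \<and> j < n \<longrightarrow> \<sigma> j \<le> \<sigma> i"
    and sig_nn: "\<forall>i<n. \<sigma> i \<ge> 0"
    and svd: "A = U * \<Sigma> * transpose_mat V"
    and sig_k: "\<sigma> (k - 1) > 0"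
    and Phi: "\<Phi> \<in> carrier_mat m d"
    and Pbar: "Pbar \<in> carrier_mat n d" "orthonormal_cols Pbar"
      "col_range Pbar = col_range ((transpose_mat A * A) ^\<^sub>m q * transpose_mat A * \<Phi>)"
    and QR: "Q \<in> carrier_mat m d" "orthonormal_cols Q" "R \<in> carrier_mat d d"
      "upper_triangular R" "A * Pbar = Q * R"
    and QR2: "Ptil \<in> carrier_mat d d" "orthonormal_cols Ptil" "Rtil \<in> carrier_mat d d"
      "upper_triangular Rtil" "transpose_mat R = Ptil * Rtil"
    and PL: "P = Pbar * Ptil" "L = transpose_mat Rtil"
    and rank: "vec_space.rank k (transpose_mat (first_cols U k) * \<Phi>) = k"
    and th: "principal_angles Q (first_cols U k) \<theta>"
    and ph: "principal_angles P (first_cols V k) \<phi>"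
  shows "\<forall>i<k.
     (let \<delta> = \<sigma> k / \<sigma> i;
          c = spec_norm (transpose_mat (last_cols U k) * \<Phi> *
                          pinv (transpose_mat (first_cols U k) * \<Phi>))
      in cos (\<theta> i) \<ge> 1 / sqrt (1 + \<delta> ^ (4*q+4) * c\<^sup>2) \<and>
         tan (\<theta> i) \<le> \<delta> ^ (2*q+2) * c \<and>
         cos (\<phi> i) \<ge> 1 / sqrt (1 + \<delta> ^ (4*q+2) * c\<^sup>2) \<and>
         tan (\<phi> i) \<le> \<delta> ^ (2*q+1) * c)"
proof -
  interpret svd_setting m n A U \<Sigma> V \<sigma>
    using assms(1) U V Sig svd sig_ord sig_nn by unfold_locales auto
  have kn: "k < n" using assms(3-5) by simp
  define B where "B = (transpose_mat A * A) ^\<^sub>m q * transpose_mat A * \<Phi>"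
  have B: "B \<in> carrier_mat n d" using sketch_carrier[OF Phi] by (simp add: B_def)
  have Pbar_orth: "transpose_mat Pbar * Pbar = 1\<^sub>m d" and Ptil_orth: "transpose_mat Ptil * Ptil = 1\<^sub>m d"
    and Q_orth: "transpose_mat Q * Q = 1\<^sub>m d"
    using Pbar(1,2) QR2(1,2) QR(1,2) by (auto simp: orthonormal_cols_def)
  have "col_range (A * B) \<subseteq> col_range (A * Pbar)"
    using col_range_mult_mono[OF A_carrier B Pbar(1)] Pbar(3) by (simp add: B_def)
  also have "\<dots> \<subseteq> col_range Q" using col_range_mult_subset[OF QR(1,3)] QR(5) by simp
  finally have range_Q: "col_range (A * B) \<subseteq> col_range Q" .
  have range_P: "col_range B \<subseteq> col_range P"
    using col_range_mult_orthogonal[OF Pbar(1) QR2(1) Ptil_orth] Pbar(3) PL(1) by (simp add: B_def)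
  have P: "P \<in> carrier_mat n d" "transpose_mat P * P = 1\<^sub>m d"
    using Pbar(1) QR2(1) orthonormal_mult[OF Pbar(1) Pbar_orth QR2(1) Ptil_orth] PL(1) by auto
  show ?thesis
    using left_principal_angle_bound[OF Phi rank kn _ sig_k QR(1) Q_orth range_Q[unfolded B_def] th]
      right_principal_angle_bound[OF Phi rank kn _ sig_k P range_P[unfolded B_def] ph]
    unfolding Let_def by blast
qed

end
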